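(* Let $R_0>0$, $T>0$, $D=[0,R_0]$, and let $L^2(D)$ denote the weighted space $L^2([0,R_0];r^2)$ with norm $\|\phi\|=\left(\int_0^{R_0} r^2|\phi(r)|^2\,dr\right)^{1/2}$. Let $\lambda_n=(n\pi/R_0)^2$ and $\omega_n(r)=\frac{\sqrt2\, n\pi}{\sqrt{R_0^3}}\frac{\sin(n\pi r/R_0)}{n\pi r/R_0}$, $n\ge1$, which form a complete orthonormal system of $L^2([0,R_0];r^2)$. Let $a:[0,T]\to\mathbb{R}$ satisfy $0<a_0\le a(t)\le a_1$ for constants $a_0,a_1$. Let $B^H$ be a fractional Brownian motion with Hurst index $H\in(0,1)$ on a complete probability space. Assume $f,g\in L^2(D)$ with $\|g\|_{L^2(D)}\neq0$, and $h\in L^\infty(0,T)$ with $h\ge C(h)>0$ a.e. on $(0,T)$ for some constant $C(h)$. Let $f_n=\int_0^{R_0}r^2f(r)\omega_n(r)\,dr$, $g_n=\int_0^{R_0}r^2g(r)\omega_n(r)\,dr$, and let $u$ be the mild solution $$u(r,t)=\sum_{n=1}^\infty\Big[f_n\int_0^t h(\tau)e^{-\lambda_n\int_\tau^t a(s)ds}\,d\tau+g_n\int_0^t e^{-\lambda_n\int_\tau^t a(s)ds}\,dB^H(\tau)\Big]\omega_n(r).$$ Then there is a constant $C>0$, not depending on $f,g,h$, such that $$\mathbb{E}\Big[\|u\|^2_{L^2(D\times[0,T])}\Big]\le C\Big(T^3\|f\|^2_{L^2(D)}\|h\|^2_{L^\infty(0,T)}+\frac{T^{2H+1}}{2H+1}\|g\|^2_{L^2(D)}\Big),$$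 where $\|u\|^2_{L^2(D\times[0,T])}=\int_0^T\|u(\cdot,t)\|^2_{L^2(D)}\,dt$.
   Context: The mild solution is that of the problem $u_t=a(t)[u_{rr}+\frac{2}{r}u_r]+f(r)h(t)+g(r)\dot B^H(t)$ on $0<r<R_0$, $0<t<T$, with $u(r,0)=0$, $u(R_0,t)=0$, $u$ bounded as $r\to0$. A fractional Brownian motion $B^H$ is a centered Gaussian process with $B^H(0)=0$ and covariance $\mathbb{E}[B^H(t)B^H(s)]=\frac12(t^{2H}+s^{2H}-|t-s|^{2H})$; the integrals $\int_0^t\psi(\tau)\,dB^H(\tau)$ of deterministic integrands are Wiener integrals with respect to $B^H$. *)

theory Defs
  imports "HOL-Probability.Probability"
begin

text \<open>Eigenvalues and normalised eigenfunctions of the radial Laplacian on the ball of radius R0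
  (Dirichlet at r = R0); the value at r = 0 is the continuous extension.\<close>
definition lam :: "real \<Rightarrow> nat \<Rightarrow> real" where
  "lam R0 n = (real n * pi / R0)\<^sup>2"

definition omega :: "real \<Rightarrow> nat \<Rightarrow> real \<Rightarrow> real" where
  "omega R0 n r = sqrt 2 * real n * pi / sqrt (R0 ^ 3) *
     (if r = 0 then 1 else sin (real n * pi * r / R0) / (real n * pi * r / R0))"

definition wnorm2 :: "real \<Rightarrow> (real \<Rightarrow> real) \<Rightarrow> real" where
  "wnorm2 R0 \<phi> = (LBINT r:{0..R0}. r\<^sup>2 * (\<phi> r)\<^sup>2)"

definition coeff :: "real \<Rightarrow> (real \<Rightarrow> real) \<Rightarrow> nat \<Rightarrow> real" where
  "coeff R0 \<phi> n = (LBINT r:{0..R0}. r\<^sup>2 * \<phi> r * omega R0 n r)"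

definition centered_gaussian_rv :: "'a measure \<Rightarrow> ('a \<Rightarrow> real) \<Rightarrow> bool" where
  "centered_gaussian_rv M X \<longleftrightarrow> X \<in> borel_measurable M \<and>
     ((AE \<omega> in M. X \<omega> = 0) \<or> (\<exists>\<sigma>>0. distributed M lborel X (normal_density 0 \<sigma>)))"

definition is_fBm :: "'a measure \<Rightarrow> real \<Rightarrow> (real \<Rightarrow> 'a \<Rightarrow> real) \<Rightarrow> bool" where
  "is_fBm M H B \<longleftrightarrow>
     (\<forall>t\<ge>0. B t \<in> borel_measurable M) \<and>
     (\<forall>\<omega>\<in>space M. B 0 \<omega> = 0) \<and>
     (\<forall>\<omega>\<in>space M. continuous_on {0..} (\<lambda>t. B t \<omega>)) \<and>
     (\<forall>I c. finite I \<longrightarrow> I \<subseteq> {0..} \<longrightarrow>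
        centered_gaussian_rv M (\<lambda>\<omega>. \<Sum>t\<in>I. c t * B t \<omega>)) \<and>
     (\<forall>t\<ge>0. \<forall>s\<ge>0. integral\<^sup>L M (\<lambda>\<omega>. B t \<omega> * B s \<omega>) =
        (t powr (2 * H) + s powr (2 * H) - \<bar>t - s\<bar> powr (2 * H)) / 2)"

text \<open>Integral of a deterministic integrand psi over [0,t] against the path of B, defined as
  the limit of Riemann--Stieltjes sums over uniform partitions (for the continuous,
  bounded-variation integrands used here this is the Wiener integral).\<close>
definition wiener_integral :: "(real \<Rightarrow> 'a \<Rightarrow> real) \<Rightarrow> (real \<Rightarrow> real) \<Rightarrow> real \<Rightarrow> 'a \<Rightarrow> real" where
  "wiener_integral B \<psi> t \<omega> =
     lim (\<lambda>N. \<Sum>k<N. \<psi> (t * real k / real N) *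
                 (B (t * real (Suc k) / real N) \<omega> - B (t * real k / real N) \<omega>))"

definition kern :: "real \<Rightarrow> (real \<Rightarrow> real) \<Rightarrow> nat \<Rightarrow> real \<Rightarrow> real \<Rightarrow> real" where
  "kern R0 a n t \<tau> = exp (- lam R0 n * (LBINT s:{\<tau>..t}. a s))"

definition mild_coeff :: "real \<Rightarrow> (real \<Rightarrow> real) \<Rightarrow> (real \<Rightarrow> 'a \<Rightarrow> real) \<Rightarrow> (real \<Rightarrow> real) \<Rightarrow>
    (real \<Rightarrow> real) \<Rightarrow> (real \<Rightarrow> real) \<Rightarrow> nat \<Rightarrow> real \<Rightarrow> 'a \<Rightarrow> real" where
  "mild_coeff R0 a B f g h n t \<omega> =
     coeff R0 f n * (LBINT \<tau>:{0..t}. h \<tau> * kern R0 a n t \<tau>)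
     + coeff R0 g n * wiener_integral B (kern R0 a n t) t \<omega>"

definition is_mild_solution :: "'a measure \<Rightarrow> real \<Rightarrow> real \<Rightarrow> (real \<Rightarrow> real) \<Rightarrow> (real \<Rightarrow> 'a \<Rightarrow> real) \<Rightarrow>
    (real \<Rightarrow> real) \<Rightarrow> (real \<Rightarrow> real) \<Rightarrow> (real \<Rightarrow> real) \<Rightarrow> (real \<Rightarrow> real \<Rightarrow> 'a \<Rightarrow> real) \<Rightarrow> bool" where
  "is_mild_solution M R0 T a B f g h u \<longleftrightarrow>
     (\<forall>t\<in>{0..T}. \<forall>\<omega>\<in>space M.
        (\<lambda>r. u r t \<omega>) \<in> borel_measurable lborel \<and>
        ((\<lambda>N. \<integral>\<^sup>+ r\<in>{0..R0}. ennreal (r\<^sup>2 * (u r t \<omega> -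
             (\<Sum>n=1..N. mild_coeff R0 a B f g h n t \<omega> * omega R0 n r))\<^sup>2) \<partial>lborel)
          \<longlonglongrightarrow> 0))"

end

theory Submission
  imports Defs
begin

text \<open>
  Expanding \<open>u(\<cdot>,t)\<close> in the orthonormal system \<open>\<omega>\<^sub>n\<close>, its squared weighted \<open>L\<^sup>2\<close> norm is at most
  twice the sum of the squared coefficients. The deterministic part of the \<open>n\<close>-th coefficient is
  \<open>f\<^sub>n \<integral>\<^sub>0\<^sup>t h(\<tau>) K\<^sub>n(t,\<tau>) d\<tau>\<close> with kernel \<open>K\<^sub>n(t,\<tau>) = exp(-\<lambda>\<^sub>n \<integral>\<^sub>\<tau>\<^sup>t a)\<close> in \<open>(0,1]\<close>, hence at most
  \<open>T \<parallel>h\<parallel>\<^sub>\<infinity> |f\<^sub>n|\<close>. The stochastic part is \<open>g\<^sub>n\<close> times a Wiener integral of \<open>K\<^sub>n(t,\<cdot>)\<close>, which is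
  nondecreasing with values in \<open>[0,1]\<close>: summation by parts turns each approximating
  Riemann--Stieltjes sum into a combination of values \<open>B\<^sup>H(\<tau>\<^sub>j)\<close> whose coefficients have total
  mass at most 2, so by convexity and \<open>E B\<^sup>H(s)\<^sup>2 = s\<^sup>2\<^sup>H\<close> its second moment is at most \<open>4 t\<^sup>2\<^sup>H\<close>,
  and Fatou's lemma passes this to the limit. Bessel's inequality for \<open>f\<close> and \<open>g\<close> and Tonelli's
  theorem over \<open>[0,T] \<times> \<Omega>\<close> (the Wiener integrals are jointly measurable in \<open>(t,\<omega>)\<close> because the
  paths are continuous) then give the estimate with \<open>C = 48\<close>.
\<close>

section \<open>Eigenfunctions and Bessel's inequality\<close>

lemma r_mult_omega:
  assumes "R0 > 0"
  shows "r * omega R0 n r = sqrt (2 / R0) * sin (real n * pi * r / R0)"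
proof (cases "r = 0 \<or> n = 0")
  case False
  have "sqrt (R0 ^ 3) = R0 * sqrt R0"
    using assms by (simp add: power3_eq_cube real_sqrt_mult)
  then have "sqrt 2 * R0 / sqrt (R0 ^ 3) = sqrt (2 / R0)"
    using assms by (simp add: real_sqrt_divide field_simps)
  moreover have "r * omega R0 n r = sqrt 2 * R0 / sqrt (R0 ^ 3) * sin (real n * pi * r / R0)"
    using False assms by (simp add: omega_def field_simps)
  ultimately show ?thesis by simp
qed (auto simp: omega_def)

lemma omega_measurable [measurable]: "omega R0 n \<in> borel_measurable borel"
  unfolding omega_def by measurable

lemma integral_cos_int_multiple_pi:
  assumes "L > 0" and "k \<noteq> 0"
  shows "(LBINT r:{0..L}. cos (real_of_int k * pi * r / L)) = 0"
proof -
  define c where "c = real_of_int k * pi / L"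
  have "c \<noteq> 0" using assms by (simp add: c_def)
  have "(LBINT r:{0..L}. cos (c * r)) = sin (c * L) / c - sin (c * 0) / c"
    unfolding set_lebesgue_integral_def using \<open>L > 0\<close> \<open>c \<noteq> 0\<close>
    by (intro integral_FTC_atLeastAtMost continuous_intros)
       (auto intro!: derivative_eq_intros simp flip: has_real_derivative_iff_has_vector_derivative)
  moreover have "c * L = real_of_int k * pi" using assms by (simp add: c_def)
  moreover have "sin (real_of_int k * pi) = 0"
    by (metis mult.commute sin_npi_int)
  ultimately show ?thesis by (simp add: c_def)
qed

lemma integral_sin_mult_sin:
  assumes "L > 0" and "n \<ge> 1" and "m \<ge> 1"
  shows "(LBINT r:{0..L}. sin (real n * pi * r / L) * sin (real m * pi * r / L))
         = (if n = m then L / 2 else 0)"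
proof -
  define C where "C k r = cos (real_of_int k * pi * r / L)" for k r
  have int_C: "set_integrable lborel {0..L} (C k)" for k
    unfolding C_def using assms by (intro borel_integrable_atLeastAtMost' continuous_intros) auto
  have "(\<lambda>r. sin (real n * pi * r / L) * sin (real m * pi * r / L))
        = (\<lambda>r. (C (int n - int m) r - C (int n + int m) r) / 2)"
    by (simp add: C_def sin_times_sin left_diff_distrib distrib_right diff_divide_distrib
                  add_divide_distrib)
  then have "(LBINT r:{0..L}. sin (real n * pi * r / L) * sin (real m * pi * r / L))
        = ((LBINT r:{0..L}. C (int n - int m) r) - (LBINT r:{0..L}. C (int n + int m) r)) / 2"
    using int_C by (simp add: set_integral_diff set_integral_divide_zero)
  also have "(LBINT r:{0..L}. C (int n + int m) r) = 0"
    unfolding C_def using assms by (intro integral_cos_int_multiple_pi) auto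
  also have "(LBINT r:{0..L}. C (int n - int m) r) = (if n = m then L else 0)"
  proof (cases "n = m")
    case True
    then show ?thesis using assms by (simp add: C_def set_integral_const)
  next
    case False
    then show ?thesis
      unfolding C_def using assms by (simp add: integral_cos_int_multiple_pi del: of_int_diff)
  qed
  also have "((if n = m then L else 0) - 0) / 2 = (if n = m then L / 2 else 0)"
    by simp
  finally show ?thesis .
qed

lemma power2_add_le: "((x::real) + y)\<^sup>2 \<le> 2 * x\<^sup>2 + 2 * y\<^sup>2"
proof -
  have "0 \<le> (x - y)\<^sup>2" by simp
  then show ?thesis by (simp add: power2_eq_square algebra_simps)
qed

lemma integrable_mult_of_square_integrable:
  fixes f g :: "'a \<Rightarrow> real"
  assumes [measurable]: "f \<in> borel_measurable N" "g \<in> borel_measurable N"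
    and "integrable N (\<lambda>x. (f x)\<^sup>2)" "integrable N (\<lambda>x. (g x)\<^sup>2)"
  shows "integrable N (\<lambda>x. f x * g x)"
proof (rule Bochner_Integration.integrable_bound)
  show "integrable N (\<lambda>x. (f x)\<^sup>2 + (g x)\<^sup>2)" using assms by auto
  show "AE x in N. norm (f x * g x) \<le> norm ((f x)\<^sup>2 + (g x)\<^sup>2)"
  proof (intro AE_I2)
    fix x
    have "2 * (\<bar>f x\<bar> * \<bar>g x\<bar>) \<le> (f x)\<^sup>2 + (g x)\<^sup>2"
      using sum_squares_bound[of "\<bar>f x\<bar>" "\<bar>g x\<bar>"] by (simp add: mult.assoc)
    moreover have "\<bar>f x\<bar> * \<bar>g x\<bar> \<le> 2 * (\<bar>f x\<bar> * \<bar>g x\<bar>)" by simp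
    ultimately have "\<bar>f x * g x\<bar> \<le> (f x)\<^sup>2 + (g x)\<^sup>2"
      unfolding abs_mult by linarith
    then show "norm (f x * g x) \<le> norm ((f x)\<^sup>2 + (g x)\<^sup>2)" by simp
  qed
qed measurable

lemma
  fixes e :: "nat \<Rightarrow> 'a \<Rightarrow> real"
  assumes "finite I"
    and int: "\<And>n m. n \<in> I \<Longrightarrow> m \<in> I \<Longrightarrow> integrable N (\<lambda>x. e n x * e m x)"
    and orth: "\<And>n m. n \<in> I \<Longrightarrow> m \<in> I \<Longrightarrow> (\<integral>x. e n x * e m x \<partial>N) = (if n = m then 1 else 0)"
  shows integrable_square_orthonormal_sum: "integrable N (\<lambda>x. (\<Sum>n\<in>I. c n * e n x)\<^sup>2)"
    and integral_square_orthonormal_sum: "(\<integral>x. (\<Sum>n\<in>I. c n * e n x)\<^sup>2 \<partial>N) = (\<Sum>n\<in>I. (c n)\<^sup>2)"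
proof -
  have expand: "(\<lambda>x. (\<Sum>n\<in>I. c n * e n x)\<^sup>2) = (\<lambda>x. \<Sum>n\<in>I. \<Sum>m\<in>I. c n * c m * (e n x * e m x))"
    by (simp add: power2_eq_square sum_product algebra_simps)
  show "integrable N (\<lambda>x. (\<Sum>n\<in>I. c n * e n x)\<^sup>2)"
    unfolding expand using int by auto
  have "(\<integral>x. (\<Sum>n\<in>I. c n * e n x)\<^sup>2 \<partial>N) = (\<Sum>n\<in>I. \<Sum>m\<in>I. c n * c m * (if n = m then 1 else 0))"
    unfolding expand using int orth by simp
  also have "\<dots> = (\<Sum>n\<in>I. (c n)\<^sup>2)"
    using \<open>finite I\<close> by (simp add: power2_eq_square if_distrib cong: if_cong)
  finally show "(\<integral>x. (\<Sum>n\<in>I. c n * e n x)\<^sup>2 \<partial>N) = (\<Sum>n\<in>I. (c n)\<^sup>2)" .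
qed

lemma bessel_inequality:
  fixes e :: "nat \<Rightarrow> 'a \<Rightarrow> real"
  assumes I: "finite I"
    and int: "\<And>n m. n \<in> I \<Longrightarrow> m \<in> I \<Longrightarrow> integrable N (\<lambda>x. e n x * e m x)"
    and orth: "\<And>n m. n \<in> I \<Longrightarrow> m \<in> I \<Longrightarrow> (\<integral>x. e n x * e m x \<partial>N) = (if n = m then 1 else 0)"
    and int_\<phi>e: "\<And>n. n \<in> I \<Longrightarrow> integrable N (\<lambda>x. \<phi> x * e n x)"
    and int_\<phi>: "integrable N (\<lambda>x. (\<phi> x)\<^sup>2)"
  shows "(\<Sum>n\<in>I. (\<integral>x. \<phi> x * e n x \<partial>N)\<^sup>2) \<le> (\<integral>x. (\<phi> x)\<^sup>2 \<partial>N)"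
proof -
  define c where "c n = (\<integral>x. \<phi> x * e n x \<partial>N)" for n
  define S where "S x = (\<Sum>n\<in>I. c n * e n x)" for x
  have \<phi>S: "(\<lambda>x. \<phi> x * S x) = (\<lambda>x. \<Sum>n\<in>I. c n * (\<phi> x * e n x))"
    by (simp add: S_def sum_distrib_left algebra_simps)
  have int_S: "integrable N (\<lambda>x. (S x)\<^sup>2)"
    unfolding S_def using I int orth by (rule integrable_square_orthonormal_sum)
  have int_\<phi>S: "integrable N (\<lambda>x. \<phi> x * S x)"
    unfolding \<phi>S using int_\<phi>e by auto
  have "0 \<le> (\<integral>x. (\<phi> x - S x)\<^sup>2 \<partial>N)" by simp
  also have "\<dots> = (\<integral>x. (\<phi> x)\<^sup>2 - 2 * (\<phi> x * S x) + (S x)\<^sup>2 \<partial>N)"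
    by (simp add: power2_diff algebra_simps)
  also have "\<dots> = (\<integral>x. (\<phi> x)\<^sup>2 \<partial>N) - 2 * (\<integral>x. \<phi> x * S x \<partial>N) + (\<integral>x. (S x)\<^sup>2 \<partial>N)"
    using int_\<phi> int_\<phi>S int_S by simp
  also have "(\<integral>x. \<phi> x * S x \<partial>N) = (\<Sum>n\<in>I. (c n)\<^sup>2)"
    unfolding \<phi>S using int_\<phi>e by (simp add: c_def power2_eq_square)
  also have "(\<integral>x. (S x)\<^sup>2 \<partial>N) = (\<Sum>n\<in>I. (c n)\<^sup>2)"
    unfolding S_def using I int orth by (rule integral_square_orthonormal_sum)
  finally show ?thesis by (simp add: c_def)
qed

text \<open>\<open>\<phi> \<mapsto> r \<phi>(r)\<close> on \<open>[0,R0]\<close>, extended by 0, is an isometry from \<open>L\<^sup>2([0,R0]; r\<^sup>2 dr)\<close> into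
  \<open>L\<^sup>2(\<real>)\<close>; it turns the \<open>\<omega>\<^sub>n\<close> into the normalised sine system.\<close>

definition flat_radial :: "real \<Rightarrow> (real \<Rightarrow> real) \<Rightarrow> real \<Rightarrow> real" where
  "flat_radial R0 \<phi> r = indicator {0..R0} r * (r * \<phi> r)"

lemma flat_radial_measurable [measurable]:
  "set_borel_measurable lborel {0..R0} \<phi> \<Longrightarrow> flat_radial R0 \<phi> \<in> borel_measurable lborel"
  unfolding flat_radial_def set_borel_measurable_def by (simp add: mult.left_commute)

lemma flat_radial_omega_measurable [measurable]: "flat_radial R0 (omega R0 n) \<in> borel_measurable borel"
  unfolding flat_radial_def by measurable

lemma flat_radial_mult:
  "flat_radial R0 \<phi> r * flat_radial R0 \<psi> r = indicator {0..R0} r * (r\<^sup>2 * \<phi> r * \<psi> r)"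
  by (simp add: flat_radial_def indicator_def power2_eq_square)

lemma flat_radial_square:
  "(flat_radial R0 \<phi> r)\<^sup>2 = indicator {0..R0} r * (r\<^sup>2 * (\<phi> r)\<^sup>2)"
  using flat_radial_mult[of R0 \<phi> r \<phi>] by (simp add: power2_eq_square mult.assoc)

lemma flat_radial_omega:
  "R0 > 0 \<Longrightarrow> flat_radial R0 (omega R0 n) r = indicator {0..R0} r * (sqrt (2 / R0) * sin (real n * pi * r / R0))"
  by (simp add: flat_radial_def r_mult_omega)

lemma
  assumes "R0 > 0" and "n \<ge> 1" and "m \<ge> 1"
  shows integrable_flat_radial_omega:
      "integrable lborel (\<lambda>r. flat_radial R0 (omega R0 n) r * flat_radial R0 (omega R0 m) r)"
    and flat_radial_omega_orthonormal:
      "(\<integral>r. flat_radial R0 (omega R0 n) r * flat_radial R0 (omega R0 m) r \<partial>lborel) = (if n = m then 1 else 0)"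
proof -
  define p where "p r = 2 / R0 * (sin (real n * pi * r / R0) * sin (real m * pi * r / R0))" for r
  have eq: "(\<lambda>r. flat_radial R0 (omega R0 n) r * flat_radial R0 (omega R0 m) r) = (\<lambda>r. indicator {0..R0} r *\<^sub>R p r)"
  proof
    fix r
    have "flat_radial R0 (omega R0 n) r * flat_radial R0 (omega R0 m) r
        = (indicator {0..R0} r * indicator {0..R0} r) * (sqrt (2 / R0) * sqrt (2 / R0))
          * (sin (real n * pi * r / R0) * sin (real m * pi * r / R0))"
      using \<open>R0 > 0\<close> by (simp only: flat_radial_omega mult_ac)
    then show "flat_radial R0 (omega R0 n) r * flat_radial R0 (omega R0 m) r = indicator {0..R0} r *\<^sub>R p r"
      using \<open>R0 > 0\<close> by (simp add: p_def indicator_def)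
  qed
  have "set_integrable lborel {0..R0} p"
    unfolding p_def using \<open>R0 > 0\<close> by (intro borel_integrable_atLeastAtMost' continuous_intros) auto
  then show "integrable lborel (\<lambda>r. flat_radial R0 (omega R0 n) r * flat_radial R0 (omega R0 m) r)"
    unfolding eq set_integrable_def .
  have "(\<integral>r. flat_radial R0 (omega R0 n) r * flat_radial R0 (omega R0 m) r \<partial>lborel) = (LBINT r:{0..R0}. p r)"
    unfolding eq set_lebesgue_integral_def ..
  also have "\<dots> = (if n = m then 1 else 0)"
    using assms by (simp add: p_def integral_sin_mult_sin)
  finally show "(\<integral>r. flat_radial R0 (omega R0 n) r * flat_radial R0 (omega R0 m) r \<partial>lborel) = (if n = m then 1 else 0)" .
qed

lemma wnorm2_eq_integral_flat_radial: "wnorm2 R0 \<phi> = (\<integral>r. (flat_radial R0 \<phi> r)\<^sup>2 \<partial>lborel)"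
  by (simp add: wnorm2_def set_lebesgue_integral_def flat_radial_square)

lemma wnorm2_nonneg: "0 \<le> wnorm2 R0 \<phi>"
  unfolding wnorm2_def set_lebesgue_integral_def by (intro Bochner_Integration.integral_nonneg_AE AE_I2) simp

lemma coeff_eq_integral_flat_radial:
  "coeff R0 \<phi> n = (\<integral>r. flat_radial R0 \<phi> r * flat_radial R0 (omega R0 n) r \<partial>lborel)"
  by (simp add: coeff_def set_lebesgue_integral_def flat_radial_mult)

lemma suminf_coeff_square_le_wnorm2:
  assumes "R0 > 0"
    and int: "set_integrable lborel {0..R0} (\<lambda>r. r\<^sup>2 * (\<phi> r)\<^sup>2)"
    and meas: "set_borel_measurable lborel {0..R0} \<phi>"
  shows "(\<Sum>n. ennreal ((coeff R0 \<phi> n)\<^sup>2)) \<le> ennreal (wnorm2 R0 \<phi>)"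
proof (rule suminf_le_const)
  show "summable (\<lambda>n. ennreal ((coeff R0 \<phi> n)\<^sup>2))" by simp
  fix K
  have int_flat: "integrable lborel (\<lambda>r. (flat_radial R0 \<phi> r)\<^sup>2)"
    using int by (simp add: flat_radial_square set_integrable_def)
  have "(\<Sum>n<K. (coeff R0 \<phi> n)\<^sup>2) = (\<Sum>n\<in>{1..<K}. (coeff R0 \<phi> n)\<^sup>2)"
    by (rule sum.mono_neutral_right) (auto simp: coeff_def omega_def Suc_le_eq)
  also have "\<dots> \<le> wnorm2 R0 \<phi>"
    unfolding coeff_eq_integral_flat_radial wnorm2_eq_integral_flat_radial
  proof (rule bessel_inequality)
    show "integrable lborel (\<lambda>r. flat_radial R0 \<phi> r * flat_radial R0 (omega R0 n) r)" if "n \<in> {1..<K}" for n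
      using that meas int_flat integrable_flat_radial_omega[OF \<open>R0 > 0\<close>, of n n]
      by (intro integrable_mult_of_square_integrable) (auto simp: power2_eq_square)
  qed (use \<open>R0 > 0\<close> int_flat integrable_flat_radial_omega flat_radial_omega_orthonormal in auto)
  finally show "(\<Sum>n<K. ennreal ((coeff R0 \<phi> n)\<^sup>2)) \<le> ennreal (wnorm2 R0 \<phi>)"
    by (simp add: ennreal_leI)
qed

lemma nn_integral_flat_radial_square:
  "(\<integral>\<^sup>+ r\<in>{0..R0}. ennreal (r\<^sup>2 * (\<phi> r)\<^sup>2) \<partial>lborel) = (\<integral>\<^sup>+ r. ennreal ((flat_radial R0 \<phi> r)\<^sup>2) \<partial>lborel)"
  by (intro nn_integral_cong) (simp add: flat_radial_square indicator_def)

lemma nn_integral_flat_radial_omega_sum_le: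
  assumes "R0 > 0"
  shows "(\<integral>\<^sup>+ r. ennreal ((\<Sum>n=1..N. c n * flat_radial R0 (omega R0 n) r)\<^sup>2) \<partial>lborel) \<le> (\<Sum>n. ennreal ((c n)\<^sup>2))"
proof -
  have "integrable lborel (\<lambda>r. (\<Sum>n=1..N. c n * flat_radial R0 (omega R0 n) r)\<^sup>2)"
    and "(\<integral>r. (\<Sum>n=1..N. c n * flat_radial R0 (omega R0 n) r)\<^sup>2 \<partial>lborel) = (\<Sum>n=1..N. (c n)\<^sup>2)"
    using integrable_square_orthonormal_sum[of "{1..N}" lborel "\<lambda>n. flat_radial R0 (omega R0 n)" c]
      integral_square_orthonormal_sum[of "{1..N}" lborel "\<lambda>n. flat_radial R0 (omega R0 n)" c]
      integrable_flat_radial_omega[OF assms] flat_radial_omega_orthonormal[OF assms]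
    by auto
  then have "(\<integral>\<^sup>+ r. ennreal ((\<Sum>n=1..N. c n * flat_radial R0 (omega R0 n) r)\<^sup>2) \<partial>lborel)
      = (\<Sum>n=1..N. ennreal ((c n)\<^sup>2))"
    by (simp add: nn_integral_eq_integral)
  also have "\<dots> \<le> (\<Sum>n. ennreal ((c n)\<^sup>2))"
    by (rule sum_le_suminf) auto
  finally show ?thesis .
qed

lemma nn_integral_weighted_square_le_of_expansion:
  assumes "R0 > 0" and [measurable]: "u \<in> borel_measurable lborel"
    and lim: "(\<lambda>N. \<integral>\<^sup>+ r\<in>{0..R0}. ennreal (r\<^sup>2 * (u r - (\<Sum>n=1..N. c n * omega R0 n r))\<^sup>2) \<partial>lborel) \<longlonglongrightarrow> 0"
  shows "(\<integral>\<^sup>+ r\<in>{0..R0}. ennreal (r\<^sup>2 * (u r)\<^sup>2) \<partial>lborel) \<le> 2 * (\<Sum>n. ennreal ((c n)\<^sup>2))"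
proof -
  define S where "S N r = (\<Sum>n=1..N. c n * omega R0 n r)" for N r
  have flat_S: "flat_radial R0 (S N) r = (\<Sum>n=1..N. c n * flat_radial R0 (omega R0 n) r)" for N r
    by (simp add: S_def flat_radial_def sum_distrib_left mult_ac)
  have flat_diff: "flat_radial R0 (\<lambda>r. u r - S N r) r = flat_radial R0 u r - flat_radial R0 (S N) r" for N r
    by (simp add: flat_radial_def algebra_simps)
  have norm_S: "(\<integral>\<^sup>+ r. ennreal ((flat_radial R0 (S N) r)\<^sup>2) \<partial>lborel) \<le> (\<Sum>n. ennreal ((c n)\<^sup>2))" for N
    unfolding flat_S by (rule nn_integral_flat_radial_omega_sum_le[OF \<open>R0 > 0\<close>])
  have bound: "(\<integral>\<^sup>+ r\<in>{0..R0}. ennreal (r\<^sup>2 * (u r)\<^sup>2) \<partial>lborel)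
      \<le> 2 * (\<integral>\<^sup>+ r\<in>{0..R0}. ennreal (r\<^sup>2 * (u r - S N r)\<^sup>2) \<partial>lborel) + 2 * (\<Sum>n. ennreal ((c n)\<^sup>2))" for N
  proof -
    have "(\<integral>\<^sup>+ r. ennreal ((flat_radial R0 u r)\<^sup>2) \<partial>lborel)
        \<le> (\<integral>\<^sup>+ r. 2 * ennreal ((flat_radial R0 u r - flat_radial R0 (S N) r)\<^sup>2)
                  + 2 * ennreal ((flat_radial R0 (S N) r)\<^sup>2) \<partial>lborel)"
    proof (rule nn_integral_mono)
      fix r
      have "ennreal ((flat_radial R0 u r)\<^sup>2)
          \<le> ennreal (2 * (flat_radial R0 u r - flat_radial R0 (S N) r)\<^sup>2 + 2 * (flat_radial R0 (S N) r)\<^sup>2)"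
        using power2_add_le[of "flat_radial R0 u r - flat_radial R0 (S N) r" "flat_radial R0 (S N) r"]
        by (intro ennreal_leI) simp
      then show "ennreal ((flat_radial R0 u r)\<^sup>2) \<le> 2 * ennreal ((flat_radial R0 u r - flat_radial R0 (S N) r)\<^sup>2)
          + 2 * ennreal ((flat_radial R0 (S N) r)\<^sup>2)"
        by (simp add: ennreal_plus ennreal_mult)
    qed
    also have "\<dots> = 2 * (\<integral>\<^sup>+ r. ennreal ((flat_radial R0 u r - flat_radial R0 (S N) r)\<^sup>2) \<partial>lborel)
                   + 2 * (\<integral>\<^sup>+ r. ennreal ((flat_radial R0 (S N) r)\<^sup>2) \<partial>lborel)"
      by (simp add: S_def flat_radial_def nn_integral_add nn_integral_cmult)
    finally show ?thesis
      unfolding nn_integral_flat_radial_square flat_diff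
      using norm_S[of N] by (meson add_left_mono mult_left_mono order_trans zero_le)
  qed
  have "(\<lambda>N. 2 * (\<integral>\<^sup>+ r\<in>{0..R0}. ennreal (r\<^sup>2 * (u r - S N r)\<^sup>2) \<partial>lborel) + 2 * (\<Sum>n. ennreal ((c n)\<^sup>2)))
      \<longlonglongrightarrow> 2 * 0 + 2 * (\<Sum>n. ennreal ((c n)\<^sup>2))"
    using lim unfolding S_def by (intro tendsto_intros) auto
  then show ?thesis
    using bound by (intro LIMSEQ_le_const) auto
qed

section \<open>The time kernel\<close>

lemma set_integrable_of_bounded:
  fixes a :: "real \<Rightarrow> real"
  assumes "set_borel_measurable lborel {0..T} a" and "\<forall>t\<in>{0..T}. \<bar>a t\<bar> \<le> K"
    and "S \<in> sets lborel" and "S \<subseteq> {0..T}"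
  shows "set_integrable lborel S a"
proof -
  have "set_integrable lborel {0..T} a"
    unfolding set_integrable_def
    using assms(1,2) unfolding set_borel_measurable_def
    by (intro integrableI_bounded_set[where A="{0..T}" and B=K])
       (auto simp: indicator_def emeasure_lborel_Icc_eq)
  then show ?thesis using assms(3,4) by (rule set_integrable_subset)
qed

lemma kern_pos: "0 < kern R0 a n t \<tau>"
  by (simp add: kern_def)

lemma kern_le_1:
  assumes "\<forall>s\<in>{\<tau>..t}. 0 \<le> a s"
  shows "kern R0 a n t \<tau> \<le> 1"
proof -
  have "0 \<le> (LBINT s:{\<tau>..t}. a s)"
    unfolding set_lebesgue_integral_def using assms
    by (intro Bochner_Integration.integral_nonneg_AE AE_I2) (simp add: indicator_def)
  then show ?thesis by (simp add: kern_def lam_def)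
qed

lemma kern_image_subset:
  assumes "\<forall>s\<in>{0..t}. 0 \<le> a s"
  shows "kern R0 a n t ` {0..t} \<subseteq> {0..1}"
  using assms kern_pos[of R0 a n t] kern_le_1[of _ t a R0 n] by (auto simp: less_imp_le)

lemma kern_mono_on:
  assumes int: "set_integrable lborel {0..t} a" and nonneg: "\<forall>s\<in>{0..t}. 0 \<le> a s"
  shows "mono_on {0..t} (kern R0 a n t)"
proof (rule mono_onI)
  fix \<tau>1 \<tau>2 assume \<tau>: "\<tau>1 \<in> {0..t}" "\<tau>2 \<in> {0..t}" "\<tau>1 \<le> \<tau>2"
  have "(LBINT s:{\<tau>1..t}. a s) = (LBINT s:{\<tau>1..<\<tau>2}. a s) + (LBINT s:{\<tau>2..t}. a s)"
  proof -
    have "{\<tau>1..t} = {\<tau>1..<\<tau>2} \<union> {\<tau>2..t}" using \<tau> by auto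
    moreover have "set_integrable lborel {\<tau>1..<\<tau>2} a" "set_integrable lborel {\<tau>2..t} a"
      using \<tau> by (auto intro: set_integrable_subset[OF int])
    ultimately show ?thesis
      by (simp add: set_integral_Un ivl_disj_int_two(7))
  qed
  moreover have "0 \<le> (LBINT s:{\<tau>1..<\<tau>2}. a s)"
    unfolding set_lebesgue_integral_def using \<tau> nonneg
    by (intro Bochner_Integration.integral_nonneg_AE AE_I2) (simp add: indicator_def)
  ultimately have "lam R0 n * (LBINT s:{\<tau>2..t}. a s) \<le> lam R0 n * (LBINT s:{\<tau>1..t}. a s)"
    by (intro mult_left_mono) (auto simp: lam_def)
  then show "kern R0 a n t \<tau>1 \<le> kern R0 a n t \<tau>2"
    by (simp add: kern_def)
qed

lemma abs_set_integral_mult_kern_le: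
  assumes bound: "AE \<tau> in lborel. \<tau> \<in> {0<..<T} \<longrightarrow> \<bar>h \<tau>\<bar> \<le> K" and "0 \<le> K"
    and nonneg: "\<forall>s\<in>{0..T}. 0 \<le> a s" and t: "0 \<le> t" "t \<le> T"
  shows "\<bar>LBINT \<tau>:{0..t}. h \<tau> * kern R0 a n t \<tau>\<bar> \<le> t * K"
proof -
  have "\<bar>LBINT \<tau>:{0..t}. h \<tau> * kern R0 a n t \<tau>\<bar> \<le> (\<integral>\<tau>. \<bar>indicator {0..t} \<tau> * (h \<tau> * kern R0 a n t \<tau>)\<bar> \<partial>lborel)"
    unfolding set_lebesgue_integral_def using integral_norm_bound by simp
  also have "\<dots> \<le> (\<integral>\<tau>. K * indicator {0..t} \<tau> \<partial>lborel)"
  proof (rule integral_mono_AE')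
    show "AE \<tau> in lborel. \<bar>indicator {0..t} \<tau> * (h \<tau> * kern R0 a n t \<tau>)\<bar> \<le> K * indicator {0..t} \<tau>"
      using bound AE_lborel_singleton[of 0] AE_lborel_singleton[of T]
    proof eventually_elim
      case (elim \<tau>)
      show ?case
      proof (cases "\<tau> \<in> {0..t}")
        case True
        then have "\<bar>h \<tau>\<bar> \<le> K" using elim t by auto
        moreover have "\<bar>kern R0 a n t \<tau>\<bar> \<le> 1"
          using True t nonneg kern_pos[of R0 a n t \<tau>] kern_le_1[of \<tau> t a R0 n] by auto
        ultimately show ?thesis
          using True \<open>0 \<le> K\<close> mult_mono[of "\<bar>h \<tau>\<bar>" K "\<bar>kern R0 a n t \<tau>\<bar>" 1] by (simp add: abs_mult)
      qed simp
    qed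
  qed (use \<open>0 \<le> K\<close> in \<open>auto simp: emeasure_lborel_Icc_eq\<close>)
  also have "\<dots> = t * K" using t by simp
  finally show ?thesis .
qed

section \<open>Riemann--Stieltjes sums\<close>

text \<open>\<open>rs_sum \<psi> b t N\<close> is the left-endpoint sum for \<open>\<integral>\<^sub>0\<^sup>t \<psi> db\<close> on the uniform partition into \<open>N\<close>
  cells, whose limit defines \<^const>\<open>wiener_integral\<close>; \<open>rs_sum_right b \<psi> t N\<close> is the
  right-endpoint sum for \<open>\<integral>\<^sub>0\<^sup>t b d\<psi>\<close> produced by summation by parts.\<close>

definition rs_sum :: "(real \<Rightarrow> real) \<Rightarrow> (real \<Rightarrow> real) \<Rightarrow> real \<Rightarrow> nat \<Rightarrow> real" where
  "rs_sum \<psi> b t N = (\<Sum>k<N. \<psi> (t * real k / real N) *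
     (b (t * real (Suc k) / real N) - b (t * real k / real N)))"

definition rs_sum_right :: "(real \<Rightarrow> real) \<Rightarrow> (real \<Rightarrow> real) \<Rightarrow> real \<Rightarrow> nat \<Rightarrow> real" where
  "rs_sum_right b \<psi> t N = (\<Sum>k<N. b (t * real (Suc k) / real N) *
     (\<psi> (t * real (Suc k) / real N) - \<psi> (t * real k / real N)))"

lemma wiener_integral_eq_lim_rs_sum: "wiener_integral B \<psi> t \<omega> = lim (rs_sum \<psi> (\<lambda>s. B s \<omega>) t)"
  unfolding wiener_integral_def rs_sum_def ..

lemma partition_point_mem:
  assumes "0 \<le> t" and "k \<le> N"
  shows "t * real k / real N \<in> {0..t}"
proof (cases "N = 0")
  case False
  then have "t * (real k / real N) \<le> t * 1" using assms by (intro mult_left_mono) auto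
  then show ?thesis using assms by simp
qed (use assms in simp)

lemma rs_sum_cong:
  assumes "0 \<le> t" and "\<And>s. s \<in> {0..t} \<Longrightarrow> \<psi> s = \<psi>' s" and "\<And>s. s \<in> {0..t} \<Longrightarrow> b s = b' s"
  shows "rs_sum \<psi> b t N = rs_sum \<psi>' b' t N"
  unfolding rs_sum_def using assms partition_point_mem[OF \<open>0 \<le> t\<close>]
  by (intro sum.cong) (auto simp del: of_nat_Suc)

lemma sum_mult_diff_by_parts:
  "(\<Sum>k<N. (p k :: real) * (b (Suc k) - b k))
     = p N * b N - p 0 * b 0 - (\<Sum>k<N. b (Suc k) * (p (Suc k) - p k))"
  by (induction N) (auto simp: algebra_simps)

lemma rs_sum_by_parts:
  assumes "N \<ge> 1"
  shows "rs_sum \<psi> b t N = \<psi> t * b t - \<psi> 0 * b 0 - rs_sum_right b \<psi> t N"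
  unfolding rs_sum_def rs_sum_right_def
  using assms sum_mult_diff_by_parts[of "\<lambda>k. \<psi> (t * real k / real N)" "\<lambda>k. b (t * real k / real N)" N]
  by simp

lemma rs_sum_right_diff_refinement:
  assumes "M \<ge> 1"
  shows "rs_sum_right b \<psi> t N - rs_sum_right b \<psi> t (N * M)
    = (\<Sum>k<N. \<Sum>i\<in>{k * M..<k * M + M}.
         (b (t * real (Suc k) / real N) - b (t * real (Suc i) / real (N * M)))
         * (\<psi> (t * real (Suc i) / real (N * M)) - \<psi> (t * real i / real (N * M))))"
proof -
  define y where "y i = t * real i / real (N * M)" for i
  have x_y: "t * real k / real N = y (k * M)" for k using assms by (simp add: y_def)
  have "\<psi> (t * real (Suc k) / real N) - \<psi> (t * real k / real N) = (\<Sum>i\<in>{k * M..<k * M + M}. \<psi> (y (Suc i)) - \<psi> (y i))"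
    for k
    unfolding x_y using sum_Suc_diff'[of "k * M" "k * M + M" "\<lambda>i. \<psi> (y i)"] by (simp add: add.commute)
  then have "rs_sum_right b \<psi> t N
      = (\<Sum>k<N. \<Sum>i\<in>{k * M..<k * M + M}. b (t * real (Suc k) / real N) * (\<psi> (y (Suc i)) - \<psi> (y i)))"
    by (simp add: rs_sum_right_def sum_distrib_left)
  moreover have "rs_sum_right b \<psi> t (N * M) = (\<Sum>k<N. \<Sum>i\<in>{k * M..<k * M + M}. b (y (Suc i)) * (\<psi> (y (Suc i)) - \<psi> (y i)))"
    unfolding rs_sum_right_def y_def by (rule sum.nat_group[symmetric])
  ultimately show ?thesis
    by (simp add: y_def sum_subtractf[symmetric] left_diff_distrib)
qed

lemma rs_sum_right_refine:
  assumes t: "0 \<le> t" and N: "N \<ge> 1" and M: "M \<ge> 1" and mono: "mono_on {0..t} \<psi>"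
    and osc: "\<And>x y. x \<in> {0..t} \<Longrightarrow> y \<in> {0..t} \<Longrightarrow> \<bar>x - y\<bar> \<le> t / real N \<Longrightarrow> \<bar>b x - b y\<bar> \<le> \<epsilon>"
  shows "\<bar>rs_sum_right b \<psi> t N - rs_sum_right b \<psi> t (N * M)\<bar> \<le> \<epsilon> * (\<psi> t - \<psi> 0)"
proof -
  define x where "x k = t * real k / real N" for k
  define y where "y i = t * real i / real (N * M)" for i
  define d where "d i = \<psi> (y (Suc i)) - \<psi> (y i)" for i
  have x_y: "x k = y (k * M)" for k using M by (simp add: x_def y_def)
  have y_mem: "i \<le> N * M \<Longrightarrow> y i \<in> {0..t}" for i
    unfolding y_def using t by (rule partition_point_mem)
  have y_mono: "i \<le> j \<Longrightarrow> y i \<le> y j" for i j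
    unfolding y_def using t by (intro divide_right_mono mult_left_mono) auto
  have "\<bar>(b (x (Suc k)) - b (y (Suc i))) * d i\<bar> \<le> \<epsilon> * d i" if "k < N" "i \<in> {k * M..<k * M + M}" for k i
  proof -
    have "Suc i \<le> Suc k * M" "Suc k * M \<le> N * M"
      using that mult_le_mono1[of "Suc k" N M] by auto
    then have "x (Suc k) \<in> {0..t}" "y (Suc i) \<in> {0..t}" "0 \<le> d i"
      using y_mem[of "Suc k * M"] y_mem[of "Suc i"] y_mem[of i] y_mono[of i "Suc i"]
      by (auto simp: x_y d_def intro!: mono_onD[OF mono])
    moreover have "x k \<le> y (Suc i)" "y (Suc i) \<le> x (Suc k)"
      unfolding x_y using that by (auto intro!: y_mono)
    moreover have "x (Suc k) - x k = t / real N" using N by (simp add: x_def field_simps)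
    ultimately show ?thesis
      using osc[of "x (Suc k)" "y (Suc i)"] by (simp add: abs_mult mult_right_mono)
  qed
  then have "\<bar>rs_sum_right b \<psi> t N - rs_sum_right b \<psi> t (N * M)\<bar> \<le> (\<Sum>k<N. \<Sum>i\<in>{k * M..<k * M + M}. \<epsilon> * d i)"
    unfolding rs_sum_right_diff_refinement[OF M] x_def[symmetric] y_def[symmetric] d_def[symmetric]
    by (intro order_trans[OF sum_abs] sum_mono order_trans[OF sum_abs]) auto
  also have "\<dots> = \<epsilon> * (\<psi> t - \<psi> 0)"
    using sum_lessThan_telescope[of "\<lambda>i. \<psi> (y i)" "N * M"] N M
    by (simp add: sum.nat_group d_def y_def flip: sum_distrib_left)
  finally show ?thesis .
qed

lemma rs_sum_right_refine_eventually:
  assumes t: "0 \<le> t" and b: "continuous_on {0..t} b" and mono: "mono_on {0..t} \<psi>" and "0 < \<epsilon>"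
  shows "\<exists>N0. \<forall>N\<ge>N0. \<forall>M\<ge>1. \<bar>rs_sum_right b \<psi> t N - rs_sum_right b \<psi> t (N * M)\<bar> \<le> \<epsilon> * (\<psi> t - \<psi> 0)"
proof -
  obtain \<delta> where "0 < \<delta>"
    and uc: "\<And>x y. x \<in> {0..t} \<Longrightarrow> y \<in> {0..t} \<Longrightarrow> dist y x < \<delta> \<Longrightarrow> dist (b y) (b x) < \<epsilon>"
    using compact_uniformly_continuous[OF b compact_Icc] \<open>0 < \<epsilon>\<close>
    unfolding uniformly_continuous_on_def by metis
  obtain N0 :: nat where N0: "t / \<delta> < real N0" using reals_Archimedean2 by blast
  have "\<bar>rs_sum_right b \<psi> t N - rs_sum_right b \<psi> t (N * M)\<bar> \<le> \<epsilon> * (\<psi> t - \<psi> 0)"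
    if "N \<ge> Suc N0" "M \<ge> 1" for N M
  proof (rule rs_sum_right_refine[OF t _ that(2) mono])
    have "t < real N0 * \<delta>" using N0 \<open>0 < \<delta>\<close> by (simp add: divide_less_eq)
    also have "\<dots> \<le> real N * \<delta>" using that(1) \<open>0 < \<delta>\<close> by (intro mult_right_mono) auto
    finally have "t / real N < \<delta>" using that(1) by (simp add: divide_less_eq mult.commute)
    then show "\<bar>b x - b y\<bar> \<le> \<epsilon>" if "x \<in> {0..t}" "y \<in> {0..t}" "\<bar>x - y\<bar> \<le> t / real N" for x y
      using uc[of x y] that by (simp add: dist_real_def abs_minus_commute)
  qed (use that in auto)
  then show ?thesis by blast
qed

lemma convergent_rs_sum_right:
  assumes t: "0 \<le> t" and b: "continuous_on {0..t} b" and mono: "mono_on {0..t} \<psi>"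
  shows "convergent (rs_sum_right b \<psi> t)"
proof -
  define V where "V = \<psi> t - \<psi> 0"
  have "0 \<le> V" using t by (simp add: V_def mono_onD[OF mono])
  have "Cauchy (rs_sum_right b \<psi> t)"
  proof (rule CauchyI)
    fix e :: real assume "0 < e"
    define \<epsilon> where "\<epsilon> = e / (2 * (V + 1))"
    have "2 * (\<epsilon> * V) = e * (V / (V + 1))"
      using \<open>0 \<le> V\<close> by (simp add: \<epsilon>_def field_simps)
    also have "\<dots> < e * 1"
      using \<open>0 < e\<close> \<open>0 \<le> V\<close> by (intro mult_strict_left_mono) auto
    finally have "2 * (\<epsilon> * V) < e" by simp
    obtain N0 where refine: "\<And>N M. N \<ge> N0 \<Longrightarrow> M \<ge> 1 \<Longrightarrow> \<bar>rs_sum_right b \<psi> t N - rs_sum_right b \<psi> t (N * M)\<bar> \<le> \<epsilon> * V"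
      using rs_sum_right_refine_eventually[OF t b mono, of \<epsilon>] \<open>0 < e\<close> \<open>0 \<le> V\<close>
      unfolding V_def \<epsilon>_def by fastforce
    show "\<exists>K. \<forall>m\<ge>K. \<forall>n\<ge>K. norm (rs_sum_right b \<psi> t m - rs_sum_right b \<psi> t n) < e"
    proof (intro exI allI impI)
      fix m n assume "m \<ge> max N0 1" "n \<ge> max N0 1"
      then have "\<bar>rs_sum_right b \<psi> t m - rs_sum_right b \<psi> t (m * n)\<bar> \<le> \<epsilon> * V"
        and "\<bar>rs_sum_right b \<psi> t n - rs_sum_right b \<psi> t (m * n)\<bar> \<le> \<epsilon> * V"
        using refine[of m n] refine[of n m] by (auto simp: mult.commute)
      then show "norm (rs_sum_right b \<psi> t m - rs_sum_right b \<psi> t n) < e"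
        using \<open>2 * (\<epsilon> * V) < e\<close> by simp
    qed
  qed
  then show ?thesis by (simp add: Cauchy_convergent_iff)
qed

lemma convergent_rs_sum:
  assumes "0 \<le> t" and "continuous_on {0..t} b" and "mono_on {0..t} \<psi>"
  shows "convergent (rs_sum \<psi> b t)"
proof -
  obtain L where "rs_sum_right b \<psi> t \<longlonglongrightarrow> L"
    using convergent_rs_sum_right[OF assms] by (auto simp: convergent_def)
  then have "(\<lambda>N. \<psi> t * b t - \<psi> 0 * b 0 - rs_sum_right b \<psi> t N) \<longlonglongrightarrow> \<psi> t * b t - \<psi> 0 * b 0 - L"
    by (intro tendsto_intros)
  then have "rs_sum \<psi> b t \<longlonglongrightarrow> \<psi> t * b t - \<psi> 0 * b 0 - L"
    by (rule Lim_transform_eventually)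
       (auto simp: eventually_sequentially rs_sum_by_parts intro!: exI[of _ 1])
  then show ?thesis by (auto simp: convergent_def)
qed

lemma square_sum_le_weighted:
  fixes c z :: "'a \<Rightarrow> real"
  shows "(\<Sum>i\<in>I. c i * z i)\<^sup>2 \<le> (\<Sum>i\<in>I. \<bar>c i\<bar>) * (\<Sum>i\<in>I. \<bar>c i\<bar> * (z i)\<^sup>2)"
proof -
  have split_c: "c i * z i = sqrt \<bar>c i\<bar> * (sgn (c i) * sqrt \<bar>c i\<bar> * z i)" for i
    by (cases "c i \<ge> 0") (auto simp: mult_ac real_sgn_eq abs_if)
  have square: "(sgn (c i) * sqrt \<bar>c i\<bar> * z i)\<^sup>2 = \<bar>c i\<bar> * (z i)\<^sup>2" for i
    by (cases "c i = 0") (auto simp: power_mult_distrib sgn_if)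
  have "(\<Sum>i\<in>I. c i * z i)\<^sup>2 = (\<Sum>i\<in>I. sqrt \<bar>c i\<bar> * (sgn (c i) * sqrt \<bar>c i\<bar> * z i))\<^sup>2"
    by (simp only: split_c)
  also have "\<dots> \<le> (\<Sum>i\<in>I. (sqrt \<bar>c i\<bar>)\<^sup>2) * (\<Sum>i\<in>I. (sgn (c i) * sqrt \<bar>c i\<bar> * z i)\<^sup>2)"
    by (rule Cauchy_Schwarz_ineq_sum)
  finally show ?thesis by (simp add: square)
qed

text \<open>By parts, the sum is \<open>\<Sum> c\<^sub>i z\<^sub>i\<close> with \<open>z\<^sub>i\<close> values of \<open>b\<close> and \<open>\<Sum> |c\<^sub>i| = 2\<psi>(t) - \<psi>(0) \<le> 2\<close>.\<close>

lemma rs_sum_square_le: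
  assumes t: "0 \<le> t" and mono: "mono_on {0..t} \<psi>" and range: "\<psi> ` {0..t} \<subseteq> {0..1}"
    and "b 0 = 0"
  shows "(rs_sum \<psi> b t N)\<^sup>2 \<le> 2 * (\<psi> t * (b t)\<^sup>2 + rs_sum_right (\<lambda>s. (b s)\<^sup>2) \<psi> t N)"
proof (cases "N = 0")
  case True
  then show ?thesis using range t by (auto simp: rs_sum_def rs_sum_right_def image_subset_iff)
next
  case False
  define x where "x k = t * real k / real N" for k
  define d where "d k = \<psi> (x (Suc k)) - \<psi> (x k)" for k
  define c where "c i = (case i of 0 \<Rightarrow> \<psi> t | Suc k \<Rightarrow> d k)" for i
  define z where "z i = (case i of 0 \<Rightarrow> b t | Suc k \<Rightarrow> - b (x (Suc k)))" for i
  have x_mem: "k \<le> N \<Longrightarrow> x k \<in> {0..t}" for k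
    unfolding x_def using t by (rule partition_point_mem)
  have d_nonneg: "0 \<le> d k" if "k < N" for k
    using x_mem[of k] x_mem[of "Suc k"] that t False
    by (auto simp: d_def x_def intro!: mono_onD[OF mono] divide_right_mono mult_left_mono)
  have \<psi>_t: "0 \<le> \<psi> t" "\<psi> t \<le> 1" "0 \<le> \<psi> 0" using range t by (auto simp: image_subset_iff)
  have "rs_sum \<psi> b t N = \<psi> t * b t - (\<Sum>k<N. d k * b (x (Suc k)))"
    using False \<open>b 0 = 0\<close> by (simp add: rs_sum_by_parts rs_sum_right_def d_def x_def mult_ac)
  also have "\<dots> = (\<Sum>i<Suc N. c i * z i)"
    unfolding sum.lessThan_Suc_shift by (simp add: c_def z_def sum_negf)
  finally have "(rs_sum \<psi> b t N)\<^sup>2 \<le> (\<Sum>i<Suc N. \<bar>c i\<bar>) * (\<Sum>i<Suc N. \<bar>c i\<bar> * (z i)\<^sup>2)"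
    using square_sum_le_weighted[of c z "{..<Suc N}"] by (simp only:)
  also have "\<dots> \<le> 2 * (\<Sum>i<Suc N. \<bar>c i\<bar> * (z i)\<^sup>2)"
  proof (rule mult_right_mono)
    have "(\<Sum>i<Suc N. \<bar>c i\<bar>) = \<psi> t + (\<Sum>k<N. d k)"
      unfolding sum.lessThan_Suc_shift using \<psi>_t d_nonneg by (simp add: c_def)
    also have "(\<Sum>k<N. d k) = \<psi> t - \<psi> 0"
      unfolding d_def using sum_lessThan_telescope[of "\<lambda>k. \<psi> (x k)" N] False by (simp add: x_def)
    finally show "(\<Sum>i<Suc N. \<bar>c i\<bar>) \<le> 2" using \<psi>_t by simp
  qed (simp add: sum_nonneg)
  also have "(\<Sum>i<Suc N. \<bar>c i\<bar> * (z i)\<^sup>2) = \<psi> t * (b t)\<^sup>2 + rs_sum_right (\<lambda>s. (b s)\<^sup>2) \<psi> t N"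
    unfolding sum.lessThan_Suc_shift using \<psi>_t d_nonneg
    by (simp add: c_def z_def rs_sum_right_def d_def x_def mult_ac)
  finally show ?thesis .
qed

lemma rs_sum_right_le:
  assumes t: "0 \<le> t" and mono: "mono_on {0..t} \<psi>" and range: "\<psi> ` {0..t} \<subseteq> {0..1}"
    and f: "\<And>s. s \<in> {0..t} \<Longrightarrow> f s \<le> C" and "0 \<le> C"
  shows "rs_sum_right f \<psi> t N \<le> C"
proof -
  define x where "x k = t * real k / real N" for k
  have x_mem: "k \<le> N \<Longrightarrow> x k \<in> {0..t}" for k
    unfolding x_def using t by (rule partition_point_mem)
  have \<Delta>_nonneg: "0 \<le> \<psi> (x (Suc k)) - \<psi> (x k)" if "k < N" for k
    using x_mem[of k] x_mem[of "Suc k"] that t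
    by (auto simp: x_def intro!: mono_onD[OF mono] divide_right_mono mult_left_mono)
  have "rs_sum_right f \<psi> t N \<le> (\<Sum>k<N. C * (\<psi> (x (Suc k)) - \<psi> (x k)))"
    unfolding rs_sum_right_def x_def[symmetric]
    using \<Delta>_nonneg x_mem f by (intro sum_mono mult_right_mono) auto
  also have "\<dots> = C * (\<psi> (x N) - \<psi> (x 0))"
    using sum_lessThan_telescope[of "\<lambda>k. \<psi> (x k)" N] by (simp add: sum_distrib_left[symmetric])
  also have "\<dots> \<le> C"
  proof -
    have "x N \<in> {0..t}" "x 0 \<in> {0..t}" by (rule x_mem, simp)+
    then have "\<psi> (x N) \<in> {0..1}" "\<psi> (x 0) \<in> {0..1}"
      using range by blast+
    then have "\<psi> (x N) - \<psi> (x 0) \<le> 1" by simp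
    then show ?thesis using \<open>0 \<le> C\<close> by (simp add: mult_left_le)
  qed
  finally show ?thesis .
qed

lemma
  fixes X :: "real \<Rightarrow> 'a \<Rightarrow> real"
  assumes "0 \<le> t" and int: "\<And>s. s \<in> {0..t} \<Longrightarrow> integrable M (X s)"
  shows integrable_rs_sum_right: "integrable M (\<lambda>\<omega>. rs_sum_right (\<lambda>s. X s \<omega>) \<psi> t N)"
    and integral_rs_sum_right:
      "(\<integral>\<omega>. rs_sum_right (\<lambda>s. X s \<omega>) \<psi> t N \<partial>M) = rs_sum_right (\<lambda>s. \<integral>\<omega>. X s \<omega> \<partial>M) \<psi> t N"
proof -
  have int_k: "integrable M (\<lambda>\<omega>. X (t * real (Suc k) / real N) \<omega> * c)" if "k < N" for k c
    using that \<open>0 \<le> t\<close> by (intro int partition_point_mem integrable_mult_left) auto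
  then show "integrable M (\<lambda>\<omega>. rs_sum_right (\<lambda>s. X s \<omega>) \<psi> t N)"
    unfolding rs_sum_right_def by (intro Bochner_Integration.integrable_sum) auto
  show "(\<integral>\<omega>. rs_sum_right (\<lambda>s. X s \<omega>) \<psi> t N \<partial>M) = rs_sum_right (\<lambda>s. \<integral>\<omega>. X s \<omega> \<partial>M) \<psi> t N"
    unfolding rs_sum_right_def using int_k by (subst Bochner_Integration.integral_sum) auto
qed

section \<open>Wiener integrals against fractional Brownian motion\<close>

lemma fBm_measurable: "is_fBm M H B \<Longrightarrow> 0 \<le> s \<Longrightarrow> B s \<in> borel_measurable M"
  by (simp add: is_fBm_def)

lemma fBm_path_continuous: "is_fBm M H B \<Longrightarrow> \<omega> \<in> space M \<Longrightarrow> continuous_on {0..} (\<lambda>s. B s \<omega>)"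
  by (simp add: is_fBm_def)

lemma fBm_second_moment:
  assumes fBm: "is_fBm M H B" and "0 \<le> s"
  shows "integrable M (\<lambda>\<omega>. (B s \<omega>)\<^sup>2)" and "(\<integral>\<omega>. (B s \<omega>)\<^sup>2 \<partial>M) = s powr (2 * H)"
proof -
  have "(\<integral>\<omega>. B s \<omega> * B s \<omega> \<partial>M) = (s powr (2 * H) + s powr (2 * H) - \<bar>s - s\<bar> powr (2 * H)) / 2"
    using fBm \<open>0 \<le> s\<close> unfolding is_fBm_def by blast
  then show moment: "(\<integral>\<omega>. (B s \<omega>)\<^sup>2 \<partial>M) = s powr (2 * H)"
    by (simp add: power2_eq_square)
  show "integrable M (\<lambda>\<omega>. (B s \<omega>)\<^sup>2)"
  proof (cases "s = 0")
    case True
    then show ?thesis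
      using fBm by (simp add: is_fBm_def Bochner_Integration.integrable_cong[where g="\<lambda>_. 0"])
  next
    case False
    \<comment> \<open>a non-integrable function has Bochner integral 0, but here the integral is positive\<close>
    then show ?thesis
      using moment \<open>0 \<le> s\<close> not_integrable_integral_eq by fastforce
  qed
qed

lemma nn_integral_rs_sum_fBm_square_le:
  assumes fBm: "is_fBm M H B" and "0 \<le> H" and t: "0 \<le> t"
    and mono: "mono_on {0..t} \<psi>" and range: "\<psi> ` {0..t} \<subseteq> {0..1}"
  shows "(\<integral>\<^sup>+\<omega>. ennreal ((rs_sum \<psi> (\<lambda>s. B s \<omega>) t N)\<^sup>2) \<partial>M) \<le> ennreal (4 * t powr (2 * H))"
proof -
  define F where "F \<omega> = 2 * (\<psi> t * (B t \<omega>)\<^sup>2 + rs_sum_right (\<lambda>s. (B s \<omega>)\<^sup>2) \<psi> t N)" for \<omega>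
  have \<psi>_t: "0 \<le> \<psi> t" "\<psi> t \<le> 1" using range t by (auto simp: image_subset_iff)
  have square_le_F: "(rs_sum \<psi> (\<lambda>s. B s \<omega>) t N)\<^sup>2 \<le> F \<omega>" if "\<omega> \<in> space M" for \<omega>
    unfolding F_def using fBm that by (intro rs_sum_square_le[OF t mono range]) (simp add: is_fBm_def)
  have int_B: "integrable M (\<lambda>\<omega>. (B s \<omega>)\<^sup>2)" if "s \<in> {0..t}" for s
    using fBm_second_moment(1)[OF fBm] that by simp
  have int_R: "integrable M (\<lambda>\<omega>. rs_sum_right (\<lambda>s. (B s \<omega>)\<^sup>2) \<psi> t N)"
    using integrable_rs_sum_right[of t M "\<lambda>s \<omega>. (B s \<omega>)\<^sup>2"] int_B t by simp
  have integral_R: "(\<integral>\<omega>. rs_sum_right (\<lambda>s. (B s \<omega>)\<^sup>2) \<psi> t N \<partial>M)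
      = rs_sum_right (\<lambda>s. \<integral>\<omega>. (B s \<omega>)\<^sup>2 \<partial>M) \<psi> t N"
    using integral_rs_sum_right[of t M "\<lambda>s \<omega>. (B s \<omega>)\<^sup>2"] int_B t by simp
  have int_F: "integrable M F"
    unfolding F_def using int_B[of t] int_R t by simp
  have "(\<integral>\<omega>. F \<omega> \<partial>M)
      = 2 * (\<psi> t * t powr (2 * H) + rs_sum_right (\<lambda>s. \<integral>\<omega>. (B s \<omega>)\<^sup>2 \<partial>M) \<psi> t N)"
    unfolding F_def using int_B[of t] int_R integral_R fBm_second_moment(2)[OF fBm t] t by simp
  also have "\<dots> \<le> 2 * (1 * t powr (2 * H) + t powr (2 * H))"
    using \<psi>_t \<open>0 \<le> H\<close> fBm_second_moment(2)[OF fBm]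
    by (intro mult_left_mono add_mono mult_right_mono rs_sum_right_le[OF t mono range])
       (auto intro: powr_mono2)
  finally have integral_F: "(\<integral>\<omega>. F \<omega> \<partial>M) \<le> 4 * t powr (2 * H)" by simp
  have "(\<integral>\<^sup>+\<omega>. ennreal ((rs_sum \<psi> (\<lambda>s. B s \<omega>) t N)\<^sup>2) \<partial>M) \<le> (\<integral>\<^sup>+\<omega>. ennreal (F \<omega>) \<partial>M)"
    using square_le_F by (intro nn_integral_mono ennreal_leI) auto
  also have "\<dots> = ennreal (\<integral>\<omega>. F \<omega> \<partial>M)"
    using int_F square_le_F by (intro nn_integral_eq_integral AE_I2) (auto intro: order_trans[OF zero_le_power2])
  finally show ?thesis
    using integral_F by (meson ennreal_leI order_trans)
qed

lemma rs_sum_fBm_tendsto_wiener_integral: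
  assumes fBm: "is_fBm M H B" and "\<omega> \<in> space M" and t: "0 \<le> t" and mono: "mono_on {0..t} \<psi>"
  shows "rs_sum \<psi> (\<lambda>s. B s \<omega>) t \<longlonglongrightarrow> wiener_integral B \<psi> t \<omega>"
proof -
  have "continuous_on {0..t} (\<lambda>s. B s \<omega>)"
    using fBm_path_continuous[OF fBm \<open>\<omega> \<in> space M\<close>] by (rule continuous_on_subset) auto
  then show ?thesis
    using convergent_rs_sum[OF t _ mono] by (simp add: wiener_integral_eq_lim_rs_sum convergent_LIMSEQ_iff)
qed

lemma borel_measurable_rs_sum_fBm:
  assumes fBm: "is_fBm M H B" and t: "0 \<le> t"
  shows "(\<lambda>\<omega>. rs_sum \<psi> (\<lambda>s. B s \<omega>) t N) \<in> borel_measurable M"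
  unfolding rs_sum_def using fBm_measurable[OF fBm] partition_point_mem[OF t]
  by (intro borel_measurable_sum borel_measurable_times borel_measurable_diff borel_measurable_const)
     (auto simp del: of_nat_Suc)

lemma nn_integral_wiener_integral_fBm_square_le:
  assumes fBm: "is_fBm M H B" and "0 \<le> H" and t: "0 \<le> t"
    and mono: "mono_on {0..t} \<psi>" and range: "\<psi> ` {0..t} \<subseteq> {0..1}"
  shows "(\<integral>\<^sup>+\<omega>. ennreal ((wiener_integral B \<psi> t \<omega>)\<^sup>2) \<partial>M) \<le> ennreal (4 * t powr (2 * H))"
proof -
  have lim: "(\<lambda>N. ennreal ((rs_sum \<psi> (\<lambda>s. B s \<omega>) t N)\<^sup>2)) \<longlonglongrightarrow> ennreal ((wiener_integral B \<psi> t \<omega>)\<^sup>2)"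
    if "\<omega> \<in> space M" for \<omega>
    using rs_sum_fBm_tendsto_wiener_integral[OF fBm that t mono] by (intro tendsto_ennrealI tendsto_power)
  have "(\<integral>\<^sup>+\<omega>. ennreal ((wiener_integral B \<psi> t \<omega>)\<^sup>2) \<partial>M)
      = (\<integral>\<^sup>+\<omega>. liminf (\<lambda>N. ennreal ((rs_sum \<psi> (\<lambda>s. B s \<omega>) t N)\<^sup>2)) \<partial>M)"
    by (intro nn_integral_cong lim_imp_Liminf[OF trivial_limit_sequentially lim, symmetric])
  also have "\<dots> \<le> liminf (\<lambda>N. \<integral>\<^sup>+\<omega>. ennreal ((rs_sum \<psi> (\<lambda>s. B s \<omega>) t N)\<^sup>2) \<partial>M)"
    using borel_measurable_rs_sum_fBm[OF fBm t] by (intro nn_integral_liminf) measurable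
  also have "\<dots> \<le> liminf (\<lambda>N. ennreal (4 * t powr (2 * H)))"
    using nn_integral_rs_sum_fBm_square_le[OF assms] by (intro Liminf_mono always_eventually) auto
  also have "\<dots> = ennreal (4 * t powr (2 * H))"
    by (simp add: Liminf_const)
  finally show ?thesis .
qed

lemma borel_measurable_wiener_integral:
  assumes fBm: "is_fBm M H B" and t: "0 \<le> t" and mono: "mono_on {0..t} \<psi>"
  shows "wiener_integral B \<psi> t \<in> borel_measurable M"
  using borel_measurable_rs_sum_fBm[OF fBm t] rs_sum_fBm_tendsto_wiener_integral[OF fBm _ t mono]
  by (rule borel_measurable_LIMSEQ_metric)

section \<open>Joint measurability in time and sample point\<close>

lemma LIMSEQ_floor_grid: "(\<lambda>m. real_of_int \<lfloor>s * real (Suc m)\<rfloor> / real (Suc m)) \<longlonglongrightarrow> s"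
proof (rule tendsto_sandwich[where f="\<lambda>m. s - 1 / real (Suc m)" and h="\<lambda>m. s"])
  show "\<forall>\<^sub>F m in sequentially. s - 1 / real (Suc m) \<le> real_of_int \<lfloor>s * real (Suc m)\<rfloor> / real (Suc m)"
  proof (intro always_eventually allI)
    fix m
    have "(s * real (Suc m) - 1) / real (Suc m) \<le> real_of_int \<lfloor>s * real (Suc m)\<rfloor> / real (Suc m)"
      by (intro divide_right_mono) linarith+
    then show "s - 1 / real (Suc m) \<le> real_of_int \<lfloor>s * real (Suc m)\<rfloor> / real (Suc m)"
      by (simp add: diff_divide_distrib)
  qed
  show "\<forall>\<^sub>F m in sequentially. real_of_int \<lfloor>s * real (Suc m)\<rfloor> / real (Suc m) \<le> s"
  proof (intro always_eventually allI)
    fix m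
    have "real_of_int \<lfloor>s * real (Suc m)\<rfloor> \<le> s * real (Suc m)" by linarith
    then show "real_of_int \<lfloor>s * real (Suc m)\<rfloor> / real (Suc m) \<le> s"
      by (simp add: divide_le_eq del: of_nat_Suc)
  qed
  show "(\<lambda>m. s - 1 / real (Suc m)) \<longlonglongrightarrow> s"
    using tendsto_diff[OF tendsto_const LIMSEQ_Suc[OF lim_const_over_n[of 1]]] by simp
qed simp

lemma borel_measurable_pair_of_continuous:
  fixes F :: "real \<Rightarrow> 'a \<Rightarrow> real"
  assumes cont: "\<And>\<omega>. \<omega> \<in> space M \<Longrightarrow> continuous_on UNIV (\<lambda>s. F s \<omega>)"
    and meas: "\<And>s. F s \<in> borel_measurable M"
  shows "(\<lambda>x. F (fst x) (snd x)) \<in> borel_measurable (lborel \<Otimes>\<^sub>M M)"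
proof (rule borel_measurable_LIMSEQ_metric)
  fix m :: nat
  show "(\<lambda>x. F (real_of_int \<lfloor>fst x * real (Suc m)\<rfloor> / real (Suc m)) (snd x)) \<in> borel_measurable (lborel \<Otimes>\<^sub>M M)"
  proof (rule measurable_compose_countable'[where f="\<lambda>i x. F (real_of_int i / real (Suc m)) (snd x)" and I=UNIV])
    show "(\<lambda>x. F (real_of_int i / real (Suc m)) (snd x)) \<in> borel_measurable (lborel \<Otimes>\<^sub>M M)" for i
      by (rule measurable_compose[OF measurable_snd meas])
    show "(\<lambda>x. \<lfloor>fst x * real (Suc m)\<rfloor>) \<in> lborel \<Otimes>\<^sub>M M \<rightarrow>\<^sub>M count_space UNIV"
      by (rule measurable_compose[OF _ measurable_real_floor]) measurable
  qed simp
next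
  fix x :: "real \<times> 'a" assume "x \<in> space (lborel \<Otimes>\<^sub>M M)"
  then have "snd x \<in> space M" by (auto simp: space_pair_measure)
  then have "isCont (\<lambda>s. F s (snd x)) (fst x)"
    using cont by (simp add: continuous_on_eq_continuous_at)
  then show "(\<lambda>m. F (real_of_int \<lfloor>fst x * real (Suc m)\<rfloor> / real (Suc m)) (snd x)) \<longlonglongrightarrow> F (fst x) (snd x)"
    by (rule isCont_tendsto_compose) (rule LIMSEQ_floor_grid)
qed

lemma borel_measurable_set_integral_Icc_param:
  fixes f :: "real \<Rightarrow> real"
  assumes [measurable]: "f \<in> borel_measurable borel" "l \<in> borel_measurable borel" "u \<in> borel_measurable borel"
  shows "(\<lambda>t. LBINT s:{l t..u t}. f s) \<in> borel_measurable lborel"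
proof -
  have "(\<lambda>x. indicator {l (fst x)..u (fst x)} (snd x) *\<^sub>R f (snd x))
      = (\<lambda>x. if l (fst x) \<le> snd x \<and> snd x \<le> u (fst x) then f (snd x) else 0)"
    by (auto simp: fun_eq_iff indicator_def)
  also have "\<dots> \<in> borel_measurable (lborel \<Otimes>\<^sub>M lborel)"
    by measurable
  finally have "(\<lambda>x. indicator {l (fst x)..u (fst x)} (snd x) *\<^sub>R f (snd x)) \<in> borel_measurable (lborel \<Otimes>\<^sub>M lborel)" .
  then show ?thesis
    unfolding set_lebesgue_integral_def by (rule lborel.borel_measurable_lebesgue_integral[unfolded case_prod_beta'])
qed

lemma borel_measurable_kern_diagonal:
  assumes "A \<in> borel_measurable borel"
  shows "(\<lambda>t. kern R0 A n t (t * c)) \<in> borel_measurable lborel"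
  unfolding kern_def using borel_measurable_set_integral_Icc_param[of A "\<lambda>t. t * c" "\<lambda>t. t"] assms
  by measurable

text \<open>Clamping time to \<open>[0,T]\<close> makes every path continuous on all of \<open>\<real>\<close>.\<close>

lemma borel_measurable_fBm_clamped:
  assumes fBm: "is_fBm M H B"
  shows "(\<lambda>x. B (max 0 (min T (fst x * c))) (snd x)) \<in> borel_measurable (lborel \<Otimes>\<^sub>M M)"
proof -
  have "(\<lambda>x. B (max 0 (min T (fst x))) (snd x)) \<in> borel_measurable (lborel \<Otimes>\<^sub>M M)"
  proof (rule borel_measurable_pair_of_continuous)
    show "continuous_on UNIV (\<lambda>s. B (max 0 (min T s)) \<omega>)" if "\<omega> \<in> space M" for \<omega>
      using fBm_path_continuous[OF fBm that]
      by (rule continuous_on_compose2) (auto intro!: continuous_intros)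
    show "B (max 0 (min T s)) \<in> borel_measurable M" for s
      using fBm by (rule fBm_measurable) simp
  qed
  from measurable_compose[OF _ this, of "\<lambda>x. (fst x * c, snd x)"] show ?thesis
    by simp
qed

lemma borel_measurable_wiener_integral_kern:
  fixes a :: "real \<Rightarrow> real" and B :: "real \<Rightarrow> 'w \<Rightarrow> real"
  assumes fBm: "is_fBm M H B" and a_meas: "set_borel_measurable lborel {0..T} a"
    and a_int: "set_integrable lborel {0..T} a" and a_nonneg: "\<forall>s\<in>{0..T}. 0 \<le> a s"
  shows "(\<lambda>x. indicator {0..T} (fst x) * wiener_integral B (kern R0 a n (fst x)) (fst x) (snd x))
           \<in> borel_measurable (lborel \<Otimes>\<^sub>M M)"
proof -
  define A where "A s = indicator {0..T} s *\<^sub>R a s" for s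
  have "A \<in> borel_measurable borel"
    using a_meas by (simp add: A_def[abs_def] set_borel_measurable_def)
  note [measurable] = borel_measurable_kern_diagonal[OF this] borel_measurable_fBm_clamped[OF fBm]
  define G where "G N x = indicator {0..T} (fst x)
    * rs_sum (kern R0 A n (fst x)) (\<lambda>s. B (max 0 (min T s)) (snd x)) (fst x) N" for N x
  have "G N \<in> borel_measurable (lborel \<Otimes>\<^sub>M M)" for N
    unfolding G_def rs_sum_def times_divide_eq_right[symmetric] by measurable
  moreover have "(\<lambda>N. G N x) \<longlonglongrightarrow> indicator {0..T} (fst x) * wiener_integral B (kern R0 a n (fst x)) (fst x) (snd x)"
    if x: "x \<in> space (lborel \<Otimes>\<^sub>M M)" for x
  proof (cases "fst x \<in> {0..T}")
    case True
    define t where "t = fst x"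
    have t: "0 \<le> t" "t \<le> T" using True by (auto simp: t_def)
    have \<omega>: "snd x \<in> space M" using x by (auto simp: space_pair_measure)
    have "kern R0 A n t s = kern R0 a n t s" if "s \<in> {0..t}" for s
    proof -
      have "(LBINT y:{s..t}. A y) = (LBINT y:{s..t}. a y)"
        using that t by (intro set_lebesgue_integral_cong) (auto simp: A_def)
      then show ?thesis by (simp add: kern_def)
    qed
    then have "G N x = rs_sum (kern R0 a n t) (\<lambda>s. B s (snd x)) t N" for N
      unfolding G_def t_def[symmetric] using True t by (simp, intro rs_sum_cong) auto
    moreover have "mono_on {0..t} (kern R0 a n t)"
      using t a_nonneg by (intro kern_mono_on set_integrable_subset[OF a_int]) auto
    ultimately show ?thesis
      using rs_sum_fBm_tendsto_wiener_integral[OF fBm \<omega> t(1)] True by (simp add: t_def)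
  qed (simp add: G_def)
  ultimately show ?thesis
    by (rule borel_measurable_LIMSEQ_metric)
qed

section \<open>The energy estimate\<close>

lemma AE_abs_le_abs_esssup:
  fixes h :: "real \<Rightarrow> real"
  assumes S: "S \<in> sets lborel" and meas: "set_borel_measurable lborel S h"
    and bounded: "\<exists>K. AE t in lborel. t \<in> S \<longrightarrow> \<bar>h t\<bar> \<le> K"
  shows "AE t in lborel. t \<in> S \<longrightarrow> \<bar>h t\<bar> \<le> \<bar>real_of_ereal (esssup (restrict_space lborel S) (\<lambda>t. ereal \<bar>h t\<bar>))\<bar>"
proof -
  define E where "E = esssup (restrict_space lborel S) (\<lambda>t. ereal \<bar>h t\<bar>)"
  have S': "S \<inter> space lborel \<in> sets lborel" using S by simp
  have "h \<in> borel_measurable (restrict_space lborel S)"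
    using meas unfolding set_borel_measurable_def by (subst borel_measurable_restrict_space_iff[OF S'])
  then have h_meas: "(\<lambda>t. ereal \<bar>h t\<bar>) \<in> borel_measurable (restrict_space lborel S)" by measurable
  obtain K where "AE t in lborel. t \<in> S \<longrightarrow> \<bar>h t\<bar> \<le> K" using bounded by blast
  then have "AE t in restrict_space lborel S. ereal \<bar>h t\<bar> \<le> ereal K"
    by (subst AE_restrict_space_iff[OF S']) auto
  then have "E \<le> ereal K" unfolding E_def by (rule esssup_I[OF h_meas])
  have "AE t in lborel. t \<in> S \<longrightarrow> ereal \<bar>h t\<bar> \<le> E"
    using esssup_AE[of "\<lambda>t. ereal \<bar>h t\<bar>" "restrict_space lborel S"]
    unfolding E_def by (subst (asm) AE_restrict_space_iff[OF S'])
  then show ?thesis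
    unfolding E_def[symmetric] by eventually_elim (use \<open>E \<le> ereal K\<close> in \<open>cases E; auto\<close>)
qed

lemma nn_integral_mild_solution_le:
  assumes "R0 > 0" and mild: "is_mild_solution M R0 T a B f g h u" and "t \<in> {0..T}" "\<omega> \<in> space M"
    and D: "\<And>n. \<bar>LBINT \<tau>:{0..t}. h \<tau> * kern R0 a n t \<tau>\<bar> \<le> D"
  shows "(\<integral>\<^sup>+ r\<in>{0..R0}. ennreal (r\<^sup>2 * (u r t \<omega>)\<^sup>2) \<partial>lborel)
    \<le> ennreal (4 * D\<^sup>2) * (\<Sum>n. ennreal ((coeff R0 f n)\<^sup>2))
      + (\<Sum>n. ennreal (4 * (coeff R0 g n)\<^sup>2 * (wiener_integral B (kern R0 a n t) t \<omega>)\<^sup>2))"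
proof -
  define c where "c n = mild_coeff R0 a B f g h n t \<omega>" for n
  define W where "W n = wiener_integral B (kern R0 a n t) t \<omega>" for n
  have c_le: "2 * (c n)\<^sup>2 \<le> 4 * D\<^sup>2 * (coeff R0 f n)\<^sup>2 + 4 * (coeff R0 g n)\<^sup>2 * (W n)\<^sup>2" for n
  proof -
    define I where "I = (LBINT \<tau>:{0..t}. h \<tau> * kern R0 a n t \<tau>)"
    have "I\<^sup>2 \<le> D\<^sup>2"
      using D[of n] abs_ge_zero[of I] unfolding I_def by (metis abs_le_square_iff abs_of_nonneg order_trans)
    then have "(coeff R0 f n * I)\<^sup>2 \<le> D\<^sup>2 * (coeff R0 f n)\<^sup>2"
      by (simp add: power_mult_distrib mult_right_mono mult.commute)
    moreover have "c n = coeff R0 f n * I + coeff R0 g n * W n"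
      by (simp add: c_def W_def I_def mild_coeff_def)
    ultimately show ?thesis
      using power2_add_le[of "coeff R0 f n * I" "coeff R0 g n * W n"] by (simp add: power_mult_distrib)
  qed
  have "(\<integral>\<^sup>+ r\<in>{0..R0}. ennreal (r\<^sup>2 * (u r t \<omega>)\<^sup>2) \<partial>lborel) \<le> 2 * (\<Sum>n. ennreal ((c n)\<^sup>2))"
    using mild \<open>t \<in> {0..T}\<close> \<open>\<omega> \<in> space M\<close> unfolding is_mild_solution_def c_def
    by (intro nn_integral_weighted_square_le_of_expansion[OF \<open>R0 > 0\<close>]) auto
  also have "\<dots> = (\<Sum>n. ennreal (2 * (c n)\<^sup>2))"
    by (simp add: ennreal_mult)
  also have "\<dots> \<le> (\<Sum>n. ennreal (4 * D\<^sup>2) * ennreal ((coeff R0 f n)\<^sup>2) + ennreal (4 * (coeff R0 g n)\<^sup>2 * (W n)\<^sup>2))"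
    using c_le by (intro suminf_le) (auto simp flip: ennreal_plus ennreal_mult intro: ennreal_leI)
  also have "\<dots> = ennreal (4 * D\<^sup>2) * (\<Sum>n. ennreal ((coeff R0 f n)\<^sup>2)) + (\<Sum>n. ennreal (4 * (coeff R0 g n)\<^sup>2 * (W n)\<^sup>2))"
    by (simp add: suminf_add[symmetric] ennreal_suminf_cmult)
  finally show ?thesis by (simp only: W_def)
qed

lemma nn_integral_noise_le:
  assumes fBm: "is_fBm M H B" and "0 \<le> H" and t: "0 \<le> t" "t \<le> T"
    and a_int: "set_integrable lborel {0..t} a" and a_nonneg: "\<forall>s\<in>{0..t}. 0 \<le> a s"
  shows "(\<integral>\<^sup>+\<omega>. (\<Sum>n. ennreal (4 * (c n)\<^sup>2 * (wiener_integral B (kern R0 a n t) t \<omega>)\<^sup>2)) \<partial>M)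
    \<le> ennreal (16 * T powr (2 * H)) * (\<Sum>n. ennreal ((c n)\<^sup>2))"
proof -
  have mono: "mono_on {0..t} (kern R0 a n t)" for n
    using a_int a_nonneg by (rule kern_mono_on)
  have [measurable]: "wiener_integral B (kern R0 a n t) t \<in> borel_measurable M" for n
    using fBm t(1) mono by (rule borel_measurable_wiener_integral)
  have "(\<integral>\<^sup>+\<omega>. (\<Sum>n. ennreal (4 * (c n)\<^sup>2 * (wiener_integral B (kern R0 a n t) t \<omega>)\<^sup>2)) \<partial>M)
      = (\<Sum>n. ennreal (4 * (c n)\<^sup>2) * (\<integral>\<^sup>+\<omega>. ennreal ((wiener_integral B (kern R0 a n t) t \<omega>)\<^sup>2) \<partial>M))"
    by (simp add: nn_integral_suminf nn_integral_cmult ennreal_mult)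
  also have "\<dots> \<le> (\<Sum>n. ennreal (4 * (c n)\<^sup>2) * ennreal (4 * T powr (2 * H)))"
  proof (intro suminf_le mult_left_mono)
    have "t powr (2 * H) \<le> T powr (2 * H)" using t \<open>0 \<le> H\<close> by (intro powr_mono2) auto
    then show "(\<integral>\<^sup>+\<omega>. ennreal ((wiener_integral B (kern R0 a n t) t \<omega>)\<^sup>2) \<partial>M) \<le> ennreal (4 * T powr (2 * H))" for n
      using nn_integral_wiener_integral_fBm_square_le[OF fBm \<open>0 \<le> H\<close> t(1) mono kern_image_subset[OF a_nonneg]]
      by (meson ennreal_leI mult_left_mono order_trans zero_le_numeral)
  qed auto
  also have "\<dots> = (\<Sum>n. ennreal (16 * T powr (2 * H)) * ennreal ((c n)\<^sup>2))"
    by (simp flip: ennreal_mult add: mult_ac)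
  also have "\<dots> = ennreal (16 * T powr (2 * H)) * (\<Sum>n. ennreal ((c n)\<^sup>2))"
    by (rule ennreal_suminf_cmult)
  finally show ?thesis .
qed

text \<open>\<open>U\<close> need not be measurable: \<open>\<integral>\<^sup>+\<close> is monotone on arbitrary functions, and Tonelli's
  theorem is only applied to the measurable majorant.\<close>

lemma nn_integral_time_integral_le_of_majorant:
  fixes U :: "real \<Rightarrow> 'w \<Rightarrow> ennreal" and Q :: "real \<times> 'w \<Rightarrow> ennreal"
  assumes "prob_space M" and "0 \<le> T" and Q_meas: "Q \<in> borel_measurable (lborel \<Otimes>\<^sub>M M)"
    and majorant: "\<And>t \<omega>. t \<in> {0..T} \<Longrightarrow> \<omega> \<in> space M \<Longrightarrow> U t \<omega> \<le> P + Q (t, \<omega>)"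
    and expectation: "\<And>t. t \<in> {0..T} \<Longrightarrow> (\<integral>\<^sup>+\<omega>. Q (t, \<omega>) \<partial>M) \<le> R"
  shows "(\<integral>\<^sup>+\<omega>. (\<integral>\<^sup>+ t\<in>{0..T}. U t \<omega> \<partial>lborel) \<partial>M) \<le> ennreal T * (P + R)"
proof -
  interpret prob_space M by fact
  interpret pair_sigma_finite lborel M
    by (simp add: pair_sigma_finite_def lborel.sigma_finite_measure_axioms sigma_finite_measure_axioms)
  have "(\<integral>\<^sup>+\<omega>. (\<integral>\<^sup>+ t\<in>{0..T}. U t \<omega> \<partial>lborel) \<partial>M)
      \<le> (\<integral>\<^sup>+\<omega>. (\<integral>\<^sup>+t. (P + Q (t, \<omega>)) * indicator {0..T} t \<partial>lborel) \<partial>M)"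
    using majorant by (intro nn_integral_mono) (simp add: indicator_def)
  also have "\<dots> = (\<integral>\<^sup>+t. (\<integral>\<^sup>+\<omega>. (P + Q (t, \<omega>)) * indicator {0..T} t \<partial>M) \<partial>lborel)"
  proof (rule Fubini')
    have "(\<lambda>x. (P + Q x) * indicator {0..T} (fst x)) \<in> borel_measurable (lborel \<Otimes>\<^sub>M M)"
      using Q_meas by measurable
    then show "(\<lambda>(t, \<omega>). (P + Q (t, \<omega>)) * indicator {0..T} t) \<in> borel_measurable (lborel \<Otimes>\<^sub>M M)"
      by (simp add: case_prod_beta')
  qed
  also have "\<dots> \<le> (\<integral>\<^sup>+t. (P + R) * indicator {0..T} t \<partial>lborel)"
  proof (rule nn_integral_mono)
    fix t
    have "(\<integral>\<^sup>+\<omega>. P + Q (t, \<omega>) \<partial>M) = P + (\<integral>\<^sup>+\<omega>. Q (t, \<omega>) \<partial>M)"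
      using Q_meas by (simp add: nn_integral_add emeasure_space_1)
    then show "(\<integral>\<^sup>+\<omega>. (P + Q (t, \<omega>)) * indicator {0..T} t \<partial>M) \<le> (P + R) * indicator {0..T} t"
      using expectation[of t] by (cases "t \<in> {0..T}") (simp_all add: add_left_mono)
  qed
  also have "\<dots> = ennreal T * (P + R)"
    using \<open>0 \<le> T\<close> by (simp add: nn_integral_cmult_indicator mult.commute)
  finally show ?thesis .
qed

lemma nn_integral_mild_solution_energy_le:
  fixes B :: "real \<Rightarrow> 'w \<Rightarrow> real"
  assumes "R0 > 0" and "0 \<le> T" and "prob_space M" and fBm: "is_fBm M H B" and "0 \<le> H"
    and a_meas: "set_borel_measurable lborel {0..T} a" and a_bounds: "\<forall>s\<in>{0..T}. 0 \<le> a s \<and> a s \<le> a_max"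
    and h_bound: "AE t in lborel. t \<in> {0<..<T} \<longrightarrow> \<bar>h t\<bar> \<le> K" and "0 \<le> K"
    and mild: "is_mild_solution M R0 T a B f g h u"
  shows "(\<integral>\<^sup>+\<omega>. (\<integral>\<^sup>+ t\<in>{0..T}. (\<integral>\<^sup>+ r\<in>{0..R0}. ennreal (r\<^sup>2 * (u r t \<omega>)\<^sup>2) \<partial>lborel) \<partial>lborel) \<partial>M)
    \<le> ennreal T * (ennreal (4 * (T * K)\<^sup>2) * (\<Sum>n. ennreal ((coeff R0 f n)\<^sup>2))
                   + ennreal (16 * T powr (2 * H)) * (\<Sum>n. ennreal ((coeff R0 g n)\<^sup>2)))"
proof (rule nn_integral_time_integral_le_of_majorant)
  have a_nonneg: "\<forall>s\<in>{0..T}. 0 \<le> a s" using a_bounds by blast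
  have a_int: "set_integrable lborel {0..T} a"
    using a_bounds by (intro set_integrable_of_bounded[OF a_meas, of a_max]) auto
  define W where "W n x = indicator {0..T} (fst x) * wiener_integral B (kern R0 a n (fst x)) (fst x) (snd x)"
    for n x
  have [measurable]: "W n \<in> borel_measurable (lborel \<Otimes>\<^sub>M M)" for n
    unfolding W_def using fBm a_meas a_int a_nonneg by (rule borel_measurable_wiener_integral_kern)
  show "(\<lambda>x. \<Sum>n. ennreal (4 * (coeff R0 g n)\<^sup>2 * (W n x)\<^sup>2)) \<in> borel_measurable (lborel \<Otimes>\<^sub>M M)"
    by measurable
  fix t assume t: "t \<in> {0..T}"
  then have W_eq: "W n (t, \<omega>) = wiener_integral B (kern R0 a n t) t \<omega>" for n \<omega>
    by (simp add: W_def)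
  show "(\<integral>\<^sup>+ r\<in>{0..R0}. ennreal (r\<^sup>2 * (u r t \<omega>)\<^sup>2) \<partial>lborel)
      \<le> ennreal (4 * (T * K)\<^sup>2) * (\<Sum>n. ennreal ((coeff R0 f n)\<^sup>2))
        + (\<Sum>n. ennreal (4 * (coeff R0 g n)\<^sup>2 * (W n (t, \<omega>))\<^sup>2))" if "\<omega> \<in> space M" for \<omega>
    unfolding W_eq
  proof (rule nn_integral_mild_solution_le[OF \<open>R0 > 0\<close> mild t that])
    show "\<bar>LBINT \<tau>:{0..t}. h \<tau> * kern R0 a n t \<tau>\<bar> \<le> T * K" for n
      using abs_set_integral_mult_kern_le[OF h_bound \<open>0 \<le> K\<close> a_nonneg, of t R0 n] t \<open>0 \<le> K\<close>
      by (auto intro: order_trans[OF _ mult_right_mono])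
  qed
  show "(\<integral>\<^sup>+\<omega>. (\<Sum>n. ennreal (4 * (coeff R0 g n)\<^sup>2 * (W n (t, \<omega>))\<^sup>2)) \<partial>M)
      \<le> ennreal (16 * T powr (2 * H)) * (\<Sum>n. ennreal ((coeff R0 g n)\<^sup>2))"
    unfolding W_eq using t a_nonneg
    by (intro nn_integral_noise_le[OF fBm \<open>0 \<le> H\<close>] set_integrable_subset[OF a_int]) auto
qed fact+

lemma ennreal_energy_bound_le:
  fixes T H E F G :: real
  assumes "0 < T" and "0 < H" and "H < 1" and "0 \<le> F" and "0 \<le> G"
  shows "ennreal T * (ennreal (4 * (T * \<bar>E\<bar>)\<^sup>2) * ennreal F + ennreal (16 * T powr (2 * H)) * ennreal G)
    \<le> ennreal (48 * (T ^ 3 * F * E\<^sup>2 + T powr (2 * H + 1) / (2 * H + 1) * G))"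
proof -
  have "T * (4 * (T * \<bar>E\<bar>)\<^sup>2 * F) = 4 * (T ^ 3 * F * E\<^sup>2)"
    by (simp add: power2_eq_square power3_eq_cube)
  moreover have "0 \<le> T ^ 3 * F * E\<^sup>2" using assms by simp
  ultimately have first: "T * (4 * (T * \<bar>E\<bar>)\<^sup>2 * F) \<le> 48 * (T ^ 3 * F * E\<^sup>2)" by linarith
  have second: "T * (16 * T powr (2 * H) * G) \<le> 48 * (T powr (2 * H + 1) / (2 * H + 1) * G)"
  proof -
    have "16 * (2 * H + 1) \<le> 48" using \<open>H < 1\<close> by simp
    then have "T powr (2 * H + 1) * G * (16 * (2 * H + 1)) \<le> T powr (2 * H + 1) * G * 48"
      using assms by (intro mult_left_mono) auto
    then show ?thesis
      using assms by (simp add: powr_add field_simps)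
  qed
  have "ennreal T * (ennreal (4 * (T * \<bar>E\<bar>)\<^sup>2) * ennreal F + ennreal (16 * T powr (2 * H)) * ennreal G)
      = ennreal (T * (4 * (T * \<bar>E\<bar>)\<^sup>2 * F + 16 * T powr (2 * H) * G))"
    using assms by (simp add: ennreal_mult ennreal_plus)
  also have "\<dots> \<le> ennreal (48 * (T ^ 3 * F * E\<^sup>2 + T powr (2 * H + 1) / (2 * H + 1) * G))"
    unfolding distrib_left by (intro ennreal_leI add_mono[OF first second])
  finally show ?thesis .
qed

theorem theorem3p1:
  fixes R0 T H a0 a1 :: real and a :: "real \<Rightarrow> real"
    and M :: "'w measure" and B :: "real \<Rightarrow> 'w \<Rightarrow> real"
  assumes "R0 > 0" and "T > 0"
    and "0 < a0" and "\<forall>t\<in>{0..T}. a0 \<le> a t \<and> a t \<le> a1"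
    and "set_borel_measurable lborel {0..T} a"
    and "0 < H" and "H < 1"
    and "prob_space M" and "complete_measure M"
    and "is_fBm M H B"
  shows "\<exists>C>0. \<forall>(f :: real \<Rightarrow> real) (g :: real \<Rightarrow> real) (h :: real \<Rightarrow> real)
             (u :: real \<Rightarrow> real \<Rightarrow> 'w \<Rightarrow> real).
     set_integrable lborel {0..R0} (\<lambda>r. r\<^sup>2 * (f r)\<^sup>2) \<longrightarrow>
     set_integrable lborel {0..R0} (\<lambda>r. r\<^sup>2 * (g r)\<^sup>2) \<longrightarrow>
     set_borel_measurable lborel {0..R0} f \<longrightarrow>
     set_borel_measurable lborel {0..R0} g \<longrightarrow>
     wnorm2 R0 g \<noteq> 0 \<longrightarrow>
     set_borel_measurable lborel {0<..<T} h \<longrightarrow>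
     (\<exists>K. AE t in lborel. t \<in> {0<..<T} \<longrightarrow> \<bar>h t\<bar> \<le> K) \<longrightarrow>
     (\<exists>ch>0. AE t in lborel. t \<in> {0<..<T} \<longrightarrow> ch \<le> h t) \<longrightarrow>
     is_mild_solution M R0 T a B f g h u \<longrightarrow>
     (\<integral>\<^sup>+ \<omega>. (\<integral>\<^sup>+ t\<in>{0..T}. (\<integral>\<^sup>+ r\<in>{0..R0}. ennreal (r\<^sup>2 * (u r t \<omega>)\<^sup>2) \<partial>lborel) \<partial>lborel) \<partial>M)
       \<le> ennreal (C * (T ^ 3 * wnorm2 R0 f *
              (real_of_ereal (esssup (restrict_space lborel {0<..<T}) (\<lambda>t. ereal \<bar>h t\<bar>)))\<^sup>2
            + T powr (2 * H + 1) / (2 * H + 1) * wnorm2 R0 g))"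
proof (intro exI[of _ 48] conjI allI impI)
  fix f g h :: "real \<Rightarrow> real" and u :: "real \<Rightarrow> real \<Rightarrow> 'w \<Rightarrow> real"
  assume f_int: "set_integrable lborel {0..R0} (\<lambda>r. r\<^sup>2 * (f r)\<^sup>2)"
    and g_int: "set_integrable lborel {0..R0} (\<lambda>r. r\<^sup>2 * (g r)\<^sup>2)"
    and f_meas: "set_borel_measurable lborel {0..R0} f" and g_meas: "set_borel_measurable lborel {0..R0} g"
    and "wnorm2 R0 g \<noteq> 0" and h_meas: "set_borel_measurable lborel {0<..<T} h"
    and h_bounded: "\<exists>K. AE t in lborel. t \<in> {0<..<T} \<longrightarrow> \<bar>h t\<bar> \<le> K"
    and "\<exists>ch>0. AE t in lborel. t \<in> {0<..<T} \<longrightarrow> ch \<le> h t"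
    and mild: "is_mild_solution M R0 T a B f g h u"
  define E where "E = real_of_ereal (esssup (restrict_space lborel {0<..<T}) (\<lambda>t. ereal \<bar>h t\<bar>))"
  have "AE t in lborel. t \<in> {0<..<T} \<longrightarrow> \<bar>h t\<bar> \<le> \<bar>E\<bar>"
    unfolding E_def using h_meas h_bounded by (intro AE_abs_le_abs_esssup) auto
  with assms mild have "(\<integral>\<^sup>+ \<omega>. (\<integral>\<^sup>+ t\<in>{0..T}. (\<integral>\<^sup>+ r\<in>{0..R0}. ennreal (r\<^sup>2 * (u r t \<omega>)\<^sup>2) \<partial>lborel) \<partial>lborel) \<partial>M)
    \<le> ennreal T * (ennreal (4 * (T * \<bar>E\<bar>)\<^sup>2) * (\<Sum>n. ennreal ((coeff R0 f n)\<^sup>2))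
                   + ennreal (16 * T powr (2 * H)) * (\<Sum>n. ennreal ((coeff R0 g n)\<^sup>2)))"
    by (intro nn_integral_mild_solution_energy_le[where a_max=a1]) auto
  also have "\<dots> \<le> ennreal T * (ennreal (4 * (T * \<bar>E\<bar>)\<^sup>2) * ennreal (wnorm2 R0 f)
                   + ennreal (16 * T powr (2 * H)) * ennreal (wnorm2 R0 g))"
    using suminf_coeff_square_le_wnorm2 \<open>R0 > 0\<close> f_int f_meas g_int g_meas
    by (intro mult_left_mono add_mono) auto
  also have "\<dots> \<le> ennreal (48 * (T ^ 3 * wnorm2 R0 f * E\<^sup>2 + T powr (2 * H + 1) / (2 * H + 1) * wnorm2 R0 g))"
    using assms by (intro ennreal_energy_bound_le wnorm2_nonneg) auto
  finally show "(\<integral>\<^sup>+ \<omega>. (\<integral>\<^sup>+ t\<in>{0..T}. (\<integral>\<^sup>+ r\<in>{0..R0}. ennreal (r\<^sup>2 * (u r t \<omega>)\<^sup>2) \<partial>lborel) \<partial>lborel) \<partial>M)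
    \<le> ennreal (48 * (T ^ 3 * wnorm2 R0 f * E\<^sup>2 + T powr (2 * H + 1) / (2 * H + 1) * wnorm2 R0 g))" .
qed simp

end
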